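(* Let $\Upsilon$ be a measurable space, $d\ge 2$, $\Omega=\Upsilon^{\mathbb{Z}^d}$ with the product $\sigma$-algebra $\mathcal F$, and let $P$ be a probability measure on $(\Omega,\mathcal F)$ invariant under all shifts $\vartheta_v$, $v\in\mathbb{Z}^d$, where $\vartheta_v(\omega)(j)=\omega(j+v)$. Assume $P$ is tail-trivial. Let $v_1,v_2\in\mathbb{Z}^d$ be linearly independent and define the 2-parameter group $\theta_k=\vartheta_{v_1}^{k^{(1)}}\circ\vartheta_{v_2}^{k^{(2)}}$ for $k=(k^{(1)},k^{(2)})\in\mathbb{Z}^2$. Let $(M,\mathcal B,\mu)$ be a probability space, $\tau:M\to M$ a $\mu$-preserving measurable transformation, $\kappa:M\to\mathbb{Z}^2$ measurable, $\kappa_n=\sum_{i=0}^{n-1}\kappa\circ\tau^i$, and $S(t,\omega)=(\tau(t),\theta_{\kappa(t)}\omega)$ on $M\times\Omega$ with product measure $\bar P=\mu\otimes P$. Assume that $\|\kappa_n(t)\|\to\infty$ as $n\to\infty$ for $\mu$-almost all $t\in M$. Then if $\tau$ is ergodic (resp. weakly mixing, resp. strongly mixing) with respect to $\mu$, $S$ is ergodic (resp. weakly mixing, resp. strongly mixing) with respect to $\bar P$.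
   Context: $\|\cdot\|$ denotes the maximum norm. For $J\subseteq\mathbb{Z}^d$, $\mathcal F_J$ is the $\sigma$-algebra generated by the projections $\omega\mapsto\omega(j)$, $j\in J$. The tail field is $\mathcal T=\bigcap_{V\subset\mathbb{Z}^d\text{ finite}}\mathcal F_{\mathbb{Z}^d\setminus V}$, and $P$ is tail-trivial if $P(A)\in\{0,1\}$ for all $A\in\mathcal T$. *)

theory Defs
  imports "HOL-Probability.Probability"
begin

definition mpt :: "'a measure \<Rightarrow> ('a \<Rightarrow> 'a) \<Rightarrow> bool" where
  "mpt M T \<longleftrightarrow> T \<in> measurable M M \<and>
     (\<forall>A\<in>sets M. emeasure M (T -` A \<inter> space M) = emeasure M A)"

definition ergodic :: "'a measure \<Rightarrow> ('a \<Rightarrow> 'a) \<Rightarrow> bool" where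
  "ergodic M T \<longleftrightarrow> mpt M T \<and>
     (\<forall>A\<in>sets M. T -` A \<inter> space M = A \<longrightarrow> measure M A = 0 \<or> measure M A = 1)"

definition weakly_mixing :: "'a measure \<Rightarrow> ('a \<Rightarrow> 'a) \<Rightarrow> bool" where
  "weakly_mixing M T \<longleftrightarrow> mpt M T \<and>
     (\<forall>A\<in>sets M. \<forall>B\<in>sets M.
        (\<lambda>n. (\<Sum>k<n. \<bar>measure M ((T ^^ k) -` A \<inter> space M \<inter> B) - measure M A * measure M B\<bar>) / real n)
          \<longlonglongrightarrow> 0)"

definition strongly_mixing :: "'a measure \<Rightarrow> ('a \<Rightarrow> 'a) \<Rightarrow> bool" where
  "strongly_mixing M T \<longleftrightarrow> mpt M T \<and>
     (\<forall>A\<in>sets M. \<forall>B\<in>sets M.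
        (\<lambda>n. measure M ((T ^^ n) -` A \<inter> space M \<inter> B)) \<longlonglongrightarrow> measure M A * measure M B)"

definition config_space :: "'u measure \<Rightarrow> ((int ^ 'd) \<Rightarrow> 'u) measure" where
  "config_space Y = Pi\<^sub>M UNIV (\<lambda>_. Y)"

definition shift :: "int ^ 'd \<Rightarrow> ((int ^ 'd) \<Rightarrow> 'u) \<Rightarrow> ((int ^ 'd) \<Rightarrow> 'u)" where
  "shift v \<omega> = (\<lambda>j. \<omega> (j + v))"

text \<open>\<theta>_k = \<vartheta>_{v1}^{k1} \<circ> \<vartheta>_{v2}^{k2}; an integer power of a shift is \<vartheta>_v^m = \<vartheta>_{m v}.\<close>
definition theta :: "int ^ 'd \<Rightarrow> int ^ 'd \<Rightarrow> int \<times> int \<Rightarrow> ((int ^ 'd) \<Rightarrow> 'u) \<Rightarrow> ((int ^ 'd) \<Rightarrow> 'u)" where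
  "theta v1 v2 k = shift (fst k *s v1) \<circ> shift (snd k *s v2)"

definition sigma_coords :: "'u measure \<Rightarrow> (int ^ 'd) set \<Rightarrow> ((int ^ 'd) \<Rightarrow> 'u) set set" where
  "sigma_coords Y J = sigma_sets (space (config_space Y))
      (\<Union>j\<in>J. {(\<lambda>\<omega>. \<omega> j) -` A \<inter> space (config_space Y) | A. A \<in> sets Y})"

definition tail_field :: "'u measure \<Rightarrow> ((int ^ 'd) \<Rightarrow> 'u) set set" where
  "tail_field Y = (\<Inter>V\<in>{V. finite V}. sigma_coords Y (UNIV - V))"

definition tail_trivial :: "'u measure \<Rightarrow> ((int ^ 'd) \<Rightarrow> 'u) measure \<Rightarrow> bool" where
  "tail_trivial Y P \<longleftrightarrow> (\<forall>A\<in>tail_field Y. measure P A = 0 \<or> measure P A = 1)"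

text \<open>Linear independence of two integer vectors (over Z, equivalently over Q or R).\<close>
definition lin_indep2 :: "int ^ 'd \<Rightarrow> int ^ 'd \<Rightarrow> bool" where
  "lin_indep2 v1 v2 \<longleftrightarrow> (\<forall>a b :: int. a *s v1 + b *s v2 = 0 \<longrightarrow> a = 0 \<and> b = 0)"

definition maxnorm2 :: "int \<times> int \<Rightarrow> int" where
  "maxnorm2 k = max \<bar>fst k\<bar> \<bar>snd k\<bar>"

definition cocycle_sum :: "('a \<Rightarrow> 'a) \<Rightarrow> ('a \<Rightarrow> int \<times> int) \<Rightarrow> nat \<Rightarrow> 'a \<Rightarrow> int \<times> int" where
  "cocycle_sum \<tau> \<kappa> n t = (\<Sum>i<n. \<kappa> ((\<tau> ^^ i) t))"

definition skew :: "int ^ 'd \<Rightarrow> int ^ 'd \<Rightarrow> ('a \<Rightarrow> 'a) \<Rightarrow> ('a \<Rightarrow> int \<times> int)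
    \<Rightarrow> 'a \<times> ((int ^ 'd) \<Rightarrow> 'u) \<Rightarrow> 'a \<times> ((int ^ 'd) \<Rightarrow> 'u)" where
  "skew v1 v2 \<tau> \<kappa> = (\<lambda>(t, \<omega>). (\<tau> t, theta v1 v2 (\<kappa> t) \<omega>))"

end

theory Submission
  imports Defs
begin

text \<open>
  For rectangles, the correlation of \<open>S\<^sup>n\<close> is the integral over \<open>t\<close> of
  \<open>1\<^sub>C(t) 1\<^sub>A(\<tau>\<^sup>n t) P(\<vartheta>\<^sub>w\<^sup>-\<^sup>1 B \<inter> D)\<close> with \<open>w = \<kappa>\<^sub>n(t)\<^sub>1 v\<^sub>1 + \<kappa>\<^sub>n(t)\<^sub>2 v\<^sub>2\<close>. Tail
  triviality makes \<open>P\<close> mixing for the shifts, \<open>P(\<vartheta>\<^sub>w\<^sup>-\<^sup>1 B \<inter> D) \<rightarrow> P(B) P(D)\<close> as \<open>w\<close> leaves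
  finite sets: \<open>B\<close> is approximated by an event depending on finitely many sites, and \<open>D\<close> decouples
  from events outside large cubes by a reversed martingale argument. As \<open>k \<mapsto> k\<^sub>1 v\<^sub>1 + k\<^sub>2 v\<^sub>2\<close>
  is injective and \<open>\<kappa>\<^sub>n(t) \<rightarrow> \<infinity>\<close>, dominated convergence shows that the correlation is
  asymptotically \<open>P(B) P(D) \<mu>(\<tau>\<^sup>-\<^sup>n A \<inter> C)\<close>.

  Strong and weak mixing both say that correlation defects vanish in a sense that is stable under
  dominated series, so they pass from \<open>\<tau>\<close> to \<open>S\<close> on rectangles and then, by a Dynkin argument, to
  all events. For ergodicity the same asymptotics show that an \<open>S\<close>-invariant \<open>E\<close> is, given \<open>t\<close>,
  independent of the configuration; hence its section measure \<open>h t = P(E\<^sub>t)\<close> satisfies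
  \<open>\<integral>h = \<integral>h\<^sup>2\<close>, so \<open>h\<close> is the indicator of a \<open>\<tau>\<close>-invariant set.
\<close>

section \<open>Mixing relative to a notion of vanishing\<close>

lemma tendsto_suminf_dominated:
  fixes c :: "nat \<Rightarrow> nat \<Rightarrow> real"
  assumes "\<And>i. (\<lambda>n. c i n) \<longlonglongrightarrow> L i" and "\<And>i n. \<bar>c i n\<bar> \<le> b i" and "summable b"
  shows "(\<lambda>n. \<Sum>i. c i n) \<longlonglongrightarrow> (\<Sum>i. L i)"
  using tannerys_theorem[where a = c and M = b and b = L and F = sequentially] assms
  by (auto intro: always_eventually)

definition cesaro_null :: "(nat \<Rightarrow> real) \<Rightarrow> bool" where
  "cesaro_null f \<longleftrightarrow> (\<lambda>n. (\<Sum>k<n. \<bar>f k\<bar>) / real n) \<longlonglongrightarrow> 0"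

lemma cesaro_null_tendsto_zero:
  assumes f: "f \<longlonglongrightarrow> 0"
  shows "cesaro_null f"
  unfolding cesaro_null_def tendsto_iff
proof (intro allI impI)
  fix \<epsilon> :: real assume "\<epsilon> > 0"
  then obtain N where N: "\<And>k. k \<ge> N \<Longrightarrow> \<bar>f k\<bar> < \<epsilon>/2"
    using f[unfolded tendsto_iff, rule_format, of "\<epsilon>/2"] by (auto simp: eventually_sequentially)
  define K where "K = (\<Sum>k<N. \<bar>f k\<bar>)"
  have "eventually (\<lambda>n. K / real n < \<epsilon>/2) sequentially"
    by (rule order_tendstoD(2)[OF lim_const_over_n]) (use \<open>\<epsilon> > 0\<close> in simp)
  then show "eventually (\<lambda>n. dist ((\<Sum>k<n. \<bar>f k\<bar>) / real n) 0 < \<epsilon>) sequentially"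
    using eventually_ge_at_top[of "Suc N"]
  proof eventually_elim
    case (elim n)
    have "(\<Sum>k<n. \<bar>f k\<bar>) = K + (\<Sum>k=N..<n. \<bar>f k\<bar>)"
      using elim(2) by (simp add: K_def lessThan_atLeast0 sum.atLeastLessThan_concat)
    also have "(\<Sum>k=N..<n. \<bar>f k\<bar>) \<le> real n * (\<epsilon>/2)"
      using sum_bounded_above[of "{N..<n}" "\<lambda>k. \<bar>f k\<bar>" "\<epsilon>/2"] N \<open>\<epsilon> > 0\<close>
      by (fastforce intro: order.trans less_imp_le mult_right_mono)
    finally have "(\<Sum>k<n. \<bar>f k\<bar>) / real n \<le> K / real n + \<epsilon>/2"
      using elim(2) by (simp add: field_simps)
    with elim(1) have "(\<Sum>k<n. \<bar>f k\<bar>) / real n < \<epsilon>" by linarith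
    then show ?case by (simp add: dist_real_def sum_nonneg)
  qed
qed

lemma cesaro_null_suminf:
  fixes c :: "nat \<Rightarrow> nat \<Rightarrow> real"
  assumes null: "\<And>i. cesaro_null (c i)" and bound: "\<And>i k. \<bar>c i k\<bar> \<le> b i" and "summable b"
  shows "cesaro_null (\<lambda>k. \<Sum>i. c i k)"
proof -
  define F where "F n = (\<Sum>i. (\<Sum>k<n. \<bar>c i k\<bar>) / real n)" for n
  have mean_bound: "\<bar>(\<Sum>k<n. \<bar>c i k\<bar>) / real n\<bar> \<le> b i" for i n
  proof (cases "n = 0")
    case False
    have "(\<Sum>k<n. \<bar>c i k\<bar>) \<le> real n * b i"
      using sum_bounded_above[of "{..<n}" "\<lambda>k. \<bar>c i k\<bar>" "b i"] bound by simp
    then show ?thesis using False by (simp add: field_simps sum_nonneg)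
  qed (use bound[of i 0] in simp)
  have "F \<longlonglongrightarrow> (\<Sum>i. 0)"
    unfolding F_def
    by (rule tendsto_suminf_dominated[OF null[unfolded cesaro_null_def] mean_bound]) fact
  then have F: "F \<longlonglongrightarrow> 0" by simp
  have summable_abs: "summable (\<lambda>i. \<bar>c i k\<bar>)" for k
    by (rule summable_rabs_comparison_test[of _ b]) (use bound \<open>summable b\<close> in auto)
  have "norm ((\<Sum>k<n. \<bar>\<Sum>i. c i k\<bar>) / real n) \<le> F n" for n
  proof -
    have "(\<Sum>k<n. \<bar>\<Sum>i. c i k\<bar>) \<le> (\<Sum>k<n. \<Sum>i. \<bar>c i k\<bar>)"
      by (intro sum_mono summable_rabs summable_abs)
    also have "\<dots> = (\<Sum>i. \<Sum>k<n. \<bar>c i k\<bar>)"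
      by (rule suminf_sum[symmetric]) (use summable_abs in auto)
    also have "\<dots> / real n = F n"
      unfolding F_def by (intro suminf_divide[symmetric] summable_sum summable_abs)
    finally show ?thesis by (simp add: sum_nonneg divide_right_mono)
  qed
  then show ?thesis
    unfolding cesaro_null_def by (rule Lim_null_comparison[OF always_eventually[OF allI] F])
qed

text \<open>Strong and weak mixing are both \<open>mixing_wrt\<close> for a notion of vanishing; the Dynkin
  argument below only needs its stability under dominated series.\<close>

locale vanishing =
  fixes vanishes :: "(nat \<Rightarrow> real) \<Rightarrow> bool"
  assumes vanishes_tendsto_zero: "f \<longlonglongrightarrow> 0 \<Longrightarrow> vanishes f"
    and vanishes_add: "vanishes f \<Longrightarrow> vanishes g \<Longrightarrow> vanishes (\<lambda>n. f n + g n)"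
    and vanishes_scale: "vanishes f \<Longrightarrow> vanishes (\<lambda>n. c * f n)"
    and vanishes_suminf: "(\<And>i. vanishes (F i)) \<Longrightarrow> (\<And>i n. \<bar>F i n\<bar> \<le> b i) \<Longrightarrow> summable b
      \<Longrightarrow> vanishes (\<lambda>n. \<Sum>i. F i n)"

interpretation tendsto_zero: vanishing "\<lambda>f. f \<longlonglongrightarrow> 0"
proof
  show "(\<lambda>n. \<Sum>i. f i n) \<longlonglongrightarrow> 0"
    if "\<And>i. f i \<longlonglongrightarrow> 0" "\<And>i n. \<bar>f i n\<bar> \<le> b i" "summable b" for f :: "nat \<Rightarrow> nat \<Rightarrow> real" and b
    using tendsto_suminf_dominated[of f "\<lambda>_. 0", OF that] by simp
qed (auto intro: tendsto_add_zero tendsto_mult_right_zero)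

interpretation cesaro: vanishing cesaro_null
proof
  show "cesaro_null f" if "f \<longlonglongrightarrow> 0" for f
    using that by (rule cesaro_null_tendsto_zero)
  show "cesaro_null (\<lambda>n. \<Sum>i. F i n)"
    if "\<And>i. cesaro_null (F i)" "\<And>i n. \<bar>F i n\<bar> \<le> b i" "summable b" for F b
    using that by (rule cesaro_null_suminf)
  show "cesaro_null (\<lambda>n. c * f n)" if "cesaro_null f" for f c
  proof -
    have "(\<lambda>n. \<bar>c\<bar> * ((\<Sum>k<n. \<bar>f k\<bar>) / real n)) \<longlonglongrightarrow> 0"
      using that unfolding cesaro_null_def by (rule tendsto_mult_right_zero)
    then show ?thesis
      by (simp add: cesaro_null_def abs_mult sum_distrib_left)
  qed
  show "cesaro_null (\<lambda>n. f n + g n)" if f: "cesaro_null f" and g: "cesaro_null g" for f g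
  proof -
    have "(\<Sum>k<n. \<bar>f k + g k\<bar>) / real n \<le> ((\<Sum>k<n. \<bar>f k\<bar>) + (\<Sum>k<n. \<bar>g k\<bar>)) / real n" for n
      unfolding sum.distrib[symmetric] by (intro divide_right_mono sum_mono abs_triangle_ineq) simp
    then have "norm ((\<Sum>k<n. \<bar>f k + g k\<bar>) / real n)
        \<le> (\<Sum>k<n. \<bar>f k\<bar>) / real n + (\<Sum>k<n. \<bar>g k\<bar>) / real n" for n
      by (simp add: sum_nonneg add_divide_distrib)
    moreover have "(\<lambda>n. (\<Sum>k<n. \<bar>f k\<bar>) / real n + (\<Sum>k<n. \<bar>g k\<bar>) / real n) \<longlonglongrightarrow> 0"
      using f g unfolding cesaro_null_def by (rule tendsto_add_zero)
    ultimately show ?thesis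
      unfolding cesaro_null_def by (rule Lim_null_comparison[OF always_eventually[OF allI]])
  qed
qed

lemma (in vanishing) vanishes_pair_measure:
  fixes d :: "('a \<times> 'b) set \<Rightarrow> nat \<Rightarrow> real"
  assumes "finite_measure (M \<Otimes>\<^sub>M N)"
    and rect: "\<And>A B. A \<in> sets M \<Longrightarrow> B \<in> sets N \<Longrightarrow> vanishes (d (A \<times> B))"
    and d_compl: "\<And>X n. X \<in> sets (M \<Otimes>\<^sub>M N) \<Longrightarrow> d (space (M \<Otimes>\<^sub>M N) - X) n = - d X n"
    and d_sums: "\<And>F n. disjoint_family F \<Longrightarrow> range F \<subseteq> sets (M \<Otimes>\<^sub>M N) \<Longrightarrow>
      (\<lambda>i. d (F i) n) sums d (\<Union>i. F i) n"
    and bound: "\<And>X n. X \<in> sets (M \<Otimes>\<^sub>M N) \<Longrightarrow> \<bar>d X n\<bar> \<le> C * measure (M \<Otimes>\<^sub>M N) X"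
    and X: "X \<in> sets (M \<Otimes>\<^sub>M N)"
  shows "vanishes (d X)"
proof -
  interpret finite_measure "M \<Otimes>\<^sub>M N" by fact
  have "X \<in> sigma_sets (space M \<times> space N) {a \<times> b | a b. a \<in> sets M \<and> b \<in> sets N}"
    using X by (simp add: sets_pair_measure)
  from Int_stable_pair_measure_generator pair_measure_closed this show ?thesis
  proof (induct rule: sigma_sets_induct_disjoint)
    case (compl A)
    then have "A \<in> sets (M \<Otimes>\<^sub>M N)" by (simp add: sets_pair_measure)
    then show ?case
      using vanishes_scale[OF compl(2), of "-1"] d_compl by (simp add: space_pair_measure)
  next
    case (union F)
    then have F: "range F \<subseteq> sets (M \<Otimes>\<^sub>M N)" by (simp add: sets_pair_measure)
    have "vanishes (\<lambda>n. \<Sum>i. d (F i) n)"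
    proof (rule vanishes_suminf[OF union(3) bound])
      show "summable (\<lambda>i. C * measure (M \<Otimes>\<^sub>M N) (F i))"
        using finite_measure_UNION[OF F union(1)] by (intro summable_mult sums_summable)
    qed (use F in auto)
    then show ?case using sums_unique[OF d_sums[OF union(1) F]] by simp
  qed (use rect rect[of "{}" "{}"] in auto)
qed

definition corr :: "'a measure \<Rightarrow> ('a \<Rightarrow> 'a) \<Rightarrow> nat \<Rightarrow> 'a set \<Rightarrow> 'a set \<Rightarrow> real" where
  "corr M T n A B = measure M ((T ^^ n) -` A \<inter> space M \<inter> B)"

definition mixing_wrt :: "((nat \<Rightarrow> real) \<Rightarrow> bool) \<Rightarrow> 'a measure \<Rightarrow> ('a \<Rightarrow> 'a) \<Rightarrow> bool" where
  "mixing_wrt vanishes M T \<longleftrightarrow>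
     (\<forall>A\<in>sets M. \<forall>B\<in>sets M. vanishes (\<lambda>n. corr M T n A B - measure M A * measure M B))"

lemma strongly_mixing_iff: "strongly_mixing M T \<longleftrightarrow> mpt M T \<and> mixing_wrt (\<lambda>f. f \<longlonglongrightarrow> 0) M T"
  by (simp add: strongly_mixing_def mixing_wrt_def corr_def LIM_zero_iff)

lemma weakly_mixing_iff: "weakly_mixing M T \<longleftrightarrow> mpt M T \<and> mixing_wrt cesaro_null M T"
  by (simp add: weakly_mixing_def mixing_wrt_def corr_def cesaro_null_def)

lemma measurable_funpow: "T \<in> measurable M M \<Longrightarrow> T ^^ n \<in> measurable M M"
  by (induction n) (auto intro: measurable_comp)

lemma mpt_funpow:
  assumes "mpt M T"
  shows "mpt M (T ^^ n)"
proof (induction n)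
  case (Suc n)
  have T: "T \<in> measurable M M" using assms by (simp add: mpt_def)
  show ?case
    unfolding mpt_def
  proof (intro conjI ballI)
    fix A assume A: "A \<in> sets M"
    have "emeasure M ((T ^^ Suc n) -` A \<inter> space M) =
        emeasure M ((T ^^ n) -` (T -` A \<inter> space M) \<inter> space M)"
      using measurable_space[OF measurable_funpow[OF T]] by (intro arg_cong[where f = "emeasure M"]) auto
    also have "\<dots> = emeasure M (T -` A \<inter> space M)"
      using Suc measurable_sets[OF T A] unfolding mpt_def by blast
    also have "\<dots> = emeasure M A"
      using assms A unfolding mpt_def by blast
    finally show "emeasure M ((T ^^ Suc n) -` A \<inter> space M) = emeasure M A" .
  qed (rule measurable_funpow[OF T])
qed (simp add: mpt_def Int_absorb2 sets.sets_into_space)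

lemma mpt_distr: "mpt M T \<Longrightarrow> distr M M T = M"
  by (intro measure_eqI) (simp_all add: mpt_def emeasure_distr)

lemma invariant_funpow:
  assumes T: "T \<in> measurable M M" and inv: "T -` E \<inter> space M = E"
  shows "(T ^^ n) -` E \<inter> space M = E"
proof (induction n)
  case (Suc n)
  have "(T ^^ Suc n) -` E \<inter> space M = (T ^^ n) -` (T -` E \<inter> space M) \<inter> space M"
    using measurable_space[OF measurable_funpow[OF T]] by auto
  also have "\<dots> = E" using Suc inv by simp
  finally show ?case .
qed (use inv in auto)

locale prob_mpt = prob_space M for M :: "'a measure" +
  fixes T :: "'a \<Rightarrow> 'a"
  assumes mpt_T: "mpt M T"
begin

lemma measurable_T_funpow: "T ^^ n \<in> measurable M M"
  using mpt_funpow[OF mpt_T] by (simp add: mpt_def)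

lemma sets_vimage_funpow: "A \<in> sets M \<Longrightarrow> (T ^^ n) -` A \<inter> space M \<in> sets M"
  by (rule measurable_sets[OF measurable_T_funpow])

lemma measure_vimage_funpow: "A \<in> sets M \<Longrightarrow> measure M ((T ^^ n) -` A \<inter> space M) = measure M A"
  using mpt_funpow[OF mpt_T] by (simp add: mpt_def measure_def)

lemma corr_le_left:
  assumes "A \<in> sets M"
  shows "corr M T n A B \<le> measure M A"
proof -
  have "corr M T n A B \<le> measure M ((T ^^ n) -` A \<inter> space M)"
    unfolding corr_def using sets_vimage_funpow[OF assms] by (intro finite_measure_mono) auto
  then show ?thesis using measure_vimage_funpow[OF assms] by simp
qed

lemma corr_le_right: "B \<in> sets M \<Longrightarrow> corr M T n A B \<le> measure M B"
  unfolding corr_def by (rule finite_measure_mono) auto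

lemma corr_compl_left:
  assumes "A \<in> sets M" "B \<in> sets M"
  shows "corr M T n (space M - A) B = measure M B - corr M T n A B"
proof -
  have "(T ^^ n) -` (space M - A) \<inter> space M \<inter> B = B - ((T ^^ n) -` A \<inter> space M \<inter> B)"
    using sets.sets_into_space[OF assms(2)] measurable_space[OF measurable_T_funpow] by blast
  then show ?thesis
    unfolding corr_def using assms sets_vimage_funpow by (simp add: finite_measure_Diff)
qed

lemma corr_compl_right:
  assumes "A \<in> sets M" "B \<in> sets M"
  shows "corr M T n A (space M - B) = measure M A - corr M T n A B"
proof -
  define V where "V = (T ^^ n) -` A \<inter> space M"
  have V: "V \<in> sets M" "measure M V = measure M A"
    unfolding V_def using assms by (simp_all add: sets_vimage_funpow measure_vimage_funpow)
  have "corr M T n A (space M - B) = measure M (V - V \<inter> B)"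
    unfolding corr_def V_def by (rule arg_cong[where f = "measure M"]) auto
  also have "\<dots> = measure M A - corr M T n A B"
    using V assms by (subst finite_measure_Diff) (auto simp: corr_def V_def)
  finally show ?thesis .
qed

lemma corr_sums_left:
  assumes F: "disjoint_family F" "range F \<subseteq> sets M" and B: "B \<in> sets M"
  shows "(\<lambda>i. corr M T n (F i) B) sums corr M T n (\<Union>i. F i) B"
proof -
  let ?G = "\<lambda>i. (T ^^ n) -` F i \<inter> space M \<inter> B"
  have "range ?G \<subseteq> sets M" using F(2) B sets_vimage_funpow by auto
  moreover have "disjoint_family ?G" using F(1) unfolding disjoint_family_on_def by blast
  ultimately have "(\<lambda>i. measure M (?G i)) sums measure M (\<Union>i. ?G i)"
    by (rule finite_measure_UNION)
  moreover have "(\<Union>i. ?G i) = (T ^^ n) -` (\<Union>i. F i) \<inter> space M \<inter> B" by blast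
  ultimately show ?thesis by (simp add: corr_def)
qed

lemma corr_sums_right:
  assumes A: "A \<in> sets M" and F: "disjoint_family F" "range F \<subseteq> sets M"
  shows "(\<lambda>i. corr M T n A (F i)) sums corr M T n A (\<Union>i. F i)"
proof -
  let ?G = "\<lambda>i. (T ^^ n) -` A \<inter> space M \<inter> F i"
  have "range ?G \<subseteq> sets M" using F(2) A sets_vimage_funpow by auto
  moreover have "disjoint_family ?G" using F(1) unfolding disjoint_family_on_def by blast
  ultimately have "(\<lambda>i. measure M (?G i)) sums measure M (\<Union>i. ?G i)"
    by (rule finite_measure_UNION)
  moreover have "(\<Union>i. ?G i) = (T ^^ n) -` A \<inter> space M \<inter> (\<Union>i. F i)" by blast
  ultimately show ?thesis by (simp add: corr_def)
qed

lemma borel_measurable_indicator_funpow: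
  assumes "A \<in> sets M" "B \<in> sets M"
  shows "(\<lambda>x. indicator B x * indicator A ((T ^^ n) x) :: real) \<in> borel_measurable M"
proof -
  have "(\<lambda>x. indicator A ((T ^^ n) x) :: real) \<in> borel_measurable M"
    using measurable_comp[OF measurable_T_funpow borel_measurable_indicator[OF assms(1)]]
    by (simp add: comp_def)
  then show ?thesis using assms(2) by (intro borel_measurable_times borel_measurable_indicator)
qed

lemma corr_eq_integral:
  assumes "A \<in> sets M" "B \<in> sets M"
  shows "corr M T n A B = (\<integral>x. indicator B x * indicator A ((T ^^ n) x) \<partial>M)"
proof -
  have "corr M T n A B = (\<integral>x. indicator ((T ^^ n) -` A \<inter> space M \<inter> B) x \<partial>M)"
    using sets_vimage_funpow[OF assms(1)] assms(2) by (simp add: corr_def)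
  also have "\<dots> = (\<integral>x. indicator B x * indicator A ((T ^^ n) x) \<partial>M)"
    by (intro Bochner_Integration.integral_cong) (auto simp: indicator_def)
  finally show ?thesis .
qed

lemma corr_defect_le_left:
  assumes "A \<in> sets M" "B \<in> sets M"
  shows "\<bar>corr M T n A B - measure M A * measure M B\<bar> \<le> 2 * measure M A"
proof -
  have "0 \<le> corr M T n A B" by (simp add: corr_def)
  moreover have "0 \<le> measure M A * measure M B" by simp
  moreover have "measure M A * measure M B \<le> measure M A" by (rule mult_right_le_one_le) auto
  ultimately show ?thesis
    using corr_le_left[OF assms(1), of n B] unfolding abs_le_iff by (intro conjI) linarith+
qed

lemma corr_defect_le_right:
  assumes "A \<in> sets M" "B \<in> sets M"
  shows "\<bar>corr M T n A B - measure M A * measure M B\<bar> \<le> 2 * measure M B"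
proof -
  have "0 \<le> corr M T n A B" by (simp add: corr_def)
  moreover have "0 \<le> measure M A * measure M B" by simp
  moreover have "measure M A * measure M B \<le> measure M B" by (rule mult_left_le_one_le) auto
  ultimately show ?thesis
    using corr_le_right[OF assms(2), of n A] unfolding abs_le_iff by (intro conjI) linarith+
qed

end

context vanishing
begin

lemma vanishes_corr_defect_left:
  assumes "prob_mpt (M \<Otimes>\<^sub>M N) T" and X: "X \<in> sets (M \<Otimes>\<^sub>M N)" and Z: "Z \<in> sets (M \<Otimes>\<^sub>M N)"
    and rect: "\<And>A B. A \<in> sets M \<Longrightarrow> B \<in> sets N \<Longrightarrow>
      vanishes (\<lambda>n. corr (M \<Otimes>\<^sub>M N) T n (A \<times> B) Z - measure (M \<Otimes>\<^sub>M N) (A \<times> B) * measure (M \<Otimes>\<^sub>M N) Z)"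
  shows "vanishes (\<lambda>n. corr (M \<Otimes>\<^sub>M N) T n X Z - measure (M \<Otimes>\<^sub>M N) X * measure (M \<Otimes>\<^sub>M N) Z)"
proof -
  interpret Q: prob_mpt "M \<Otimes>\<^sub>M N" T by fact
  let ?\<mu> = "measure (M \<Otimes>\<^sub>M N)"
  show ?thesis
  proof (rule vanishes_pair_measure[OF Q.finite_measure_axioms rect _ _ Q.corr_defect_le_left[OF _ Z] X])
    show "corr (M \<Otimes>\<^sub>M N) T n (space (M \<Otimes>\<^sub>M N) - X) Z - ?\<mu> (space (M \<Otimes>\<^sub>M N) - X) * ?\<mu> Z
        = - (corr (M \<Otimes>\<^sub>M N) T n X Z - ?\<mu> X * ?\<mu> Z)" if "X \<in> sets (M \<Otimes>\<^sub>M N)" for X n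
      using Q.corr_compl_left[OF that Z] by (simp add: Q.prob_compl[OF that] algebra_simps)
    show "(\<lambda>i. corr (M \<Otimes>\<^sub>M N) T n (F i) Z - ?\<mu> (F i) * ?\<mu> Z) sums
        (corr (M \<Otimes>\<^sub>M N) T n (\<Union>i. F i) Z - ?\<mu> (\<Union>i. F i) * ?\<mu> Z)"
      if "disjoint_family F" "range F \<subseteq> sets (M \<Otimes>\<^sub>M N)" for F n
      using Q.corr_sums_left[OF that Z] Q.finite_measure_UNION[OF that(2,1)] by (intro sums_diff sums_mult2)
  qed
qed

lemma vanishes_corr_defect_right:
  assumes "prob_mpt (M \<Otimes>\<^sub>M N) T" and X: "X \<in> sets (M \<Otimes>\<^sub>M N)" and Z: "Z \<in> sets (M \<Otimes>\<^sub>M N)"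
    and rect: "\<And>C D. C \<in> sets M \<Longrightarrow> D \<in> sets N \<Longrightarrow>
      vanishes (\<lambda>n. corr (M \<Otimes>\<^sub>M N) T n X (C \<times> D) - measure (M \<Otimes>\<^sub>M N) X * measure (M \<Otimes>\<^sub>M N) (C \<times> D))"
  shows "vanishes (\<lambda>n. corr (M \<Otimes>\<^sub>M N) T n X Z - measure (M \<Otimes>\<^sub>M N) X * measure (M \<Otimes>\<^sub>M N) Z)"
proof -
  interpret Q: prob_mpt "M \<Otimes>\<^sub>M N" T by fact
  let ?\<mu> = "measure (M \<Otimes>\<^sub>M N)"
  show ?thesis
  proof (rule vanishes_pair_measure[OF Q.finite_measure_axioms rect _ _ Q.corr_defect_le_right[OF X] Z])
    show "corr (M \<Otimes>\<^sub>M N) T n X (space (M \<Otimes>\<^sub>M N) - Z) - ?\<mu> X * ?\<mu> (space (M \<Otimes>\<^sub>M N) - Z)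
        = - (corr (M \<Otimes>\<^sub>M N) T n X Z - ?\<mu> X * ?\<mu> Z)" if "Z \<in> sets (M \<Otimes>\<^sub>M N)" for Z n
      using Q.corr_compl_right[OF X that] by (simp add: Q.prob_compl[OF that] algebra_simps)
    show "(\<lambda>i. corr (M \<Otimes>\<^sub>M N) T n X (F i) - ?\<mu> X * ?\<mu> (F i)) sums
        (corr (M \<Otimes>\<^sub>M N) T n X (\<Union>i. F i) - ?\<mu> X * ?\<mu> (\<Union>i. F i))"
      if "disjoint_family F" "range F \<subseteq> sets (M \<Otimes>\<^sub>M N)" for F n
      using Q.corr_sums_right[OF X that] Q.finite_measure_UNION[OF that(2,1)] by (intro sums_diff sums_mult)
  qed
qed

lemma mixing_wrt_pair_measureI:
  assumes T: "prob_mpt (M \<Otimes>\<^sub>M N) T"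
    and rect: "\<And>A B C D. A \<in> sets M \<Longrightarrow> B \<in> sets N \<Longrightarrow> C \<in> sets M \<Longrightarrow> D \<in> sets N \<Longrightarrow>
      vanishes (\<lambda>n. corr (M \<Otimes>\<^sub>M N) T n (A \<times> B) (C \<times> D)
        - measure (M \<Otimes>\<^sub>M N) (A \<times> B) * measure (M \<Otimes>\<^sub>M N) (C \<times> D))"
  shows "mixing_wrt vanishes (M \<Otimes>\<^sub>M N) T"
  unfolding mixing_wrt_def
proof (intro ballI)
  fix X Z assume X: "X \<in> sets (M \<Otimes>\<^sub>M N)" and Z: "Z \<in> sets (M \<Otimes>\<^sub>M N)"
  show "vanishes (\<lambda>n. corr (M \<Otimes>\<^sub>M N) T n X Z - measure (M \<Otimes>\<^sub>M N) X * measure (M \<Otimes>\<^sub>M N) Z)"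
  proof (rule vanishes_corr_defect_right[OF T X Z])
    fix C D assume C: "C \<in> sets M" and D: "D \<in> sets N"
    show "vanishes (\<lambda>n. corr (M \<Otimes>\<^sub>M N) T n X (C \<times> D)
        - measure (M \<Otimes>\<^sub>M N) X * measure (M \<Otimes>\<^sub>M N) (C \<times> D))"
      by (rule vanishes_corr_defect_left[OF T X]) (use C D rect in auto)
  qed
qed

end

section \<open>Conditional expectations along a decreasing sequence of \<sigma>-algebras\<close>

lemma (in prob_space) integral_abs_square_le:
  fixes h :: "'a \<Rightarrow> real"
  assumes "integrable M h" "integrable M (\<lambda>x. (h x)\<^sup>2)"
  shows "(\<integral>x. \<bar>h x\<bar> \<partial>M)\<^sup>2 \<le> (\<integral>x. (h x)\<^sup>2 \<partial>M)"
  using variance_positive[of "\<lambda>x. \<bar>h x\<bar>"] variance_eq[of "\<lambda>x. \<bar>h x\<bar>"] assms by simp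

lemma (in prob_space) integrable_bounded_mult:
  fixes u v :: "'a \<Rightarrow> real"
  assumes "u \<in> borel_measurable M" "v \<in> borel_measurable M"
    and "AE x in M. \<bar>u x\<bar> \<le> 1" "AE x in M. \<bar>v x\<bar> \<le> 1"
  shows "integrable M (\<lambda>x. u x * v x)"
proof (rule integrable_const_bound[where B = 1])
  show "AE x in M. norm (u x * v x) \<le> 1"
    using assms(3,4) by eventually_elim (simp add: abs_mult mult_le_one)
qed (use assms in auto)

locale decreasing_subalgebras = prob_space P for P :: "'x measure" +
  fixes G :: "nat \<Rightarrow> 'x measure"
  assumes subalgebra_G: "subalgebra P (G n)"
    and sets_G_Suc: "sets (G (Suc n)) \<subseteq> sets (G n)"
begin

lemma sigma_finite_subalgebra_G: "sigma_finite_subalgebra P (G n)"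
  unfolding sigma_finite_subalgebra_def
  using subalgebra_G finite_measure_restr_to_subalg finite_measure_axioms finite_measure_def by blast

lemma subalgebra_G_le: "n \<le> m \<Longrightarrow> subalgebra (G n) (G m)"
  using subalgebra_G lift_Suc_antimono_le[of "\<lambda>n. sets (G n)", OF sets_G_Suc]
  by (simp add: subalgebra_def)

end

text \<open>The conditional expectations \<open>ce n\<close> of a bounded \<open>f\<close> given a decreasing sequence of
  \<sigma>-algebras form a reversed martingale; \<open>ce_sq n = \<integral> (ce n)\<^sup>2\<close> decreases and the increments are
  orthogonal. This replaces the reversed martingale convergence theorem.\<close>

locale cond_exp_decreasing = decreasing_subalgebras P G for P :: "'x measure" and G +
  fixes f :: "'x \<Rightarrow> real"
  assumes f_measurable: "f \<in> borel_measurable P" and f_bounded: "\<bar>f x\<bar> \<le> 1"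
begin

definition ce :: "nat \<Rightarrow> 'x \<Rightarrow> real" where
  "ce n = real_cond_exp P (G n) f"

definition ce_sq :: "nat \<Rightarrow> real" where
  "ce_sq n = (\<integral>x. ce n x * f x \<partial>P)"

lemma integrable_f: "integrable P f"
  by (rule integrable_const_bound[where B = 1]) (use f_bounded f_measurable in auto)

lemma ce_measurable_le:
  assumes "n \<le> m"
  shows "ce m \<in> borel_measurable (G n)"
proof -
  have "ce m \<in> borel_measurable (G m)"
    unfolding ce_def by (rule borel_measurable_cond_exp)
  then show ?thesis by (rule measurable_from_subalg[OF subalgebra_G_le[OF assms]])
qed

lemma ce_measurable: "ce n \<in> borel_measurable P"
  using measurable_from_subalg[OF subalgebra_G ce_measurable_le[OF order_refl]] .

lemma ce_bounded: "AE x in P. \<bar>ce n x\<bar> \<le> 1"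
proof -
  have "AE x in P. ce n x \<le> 1"
    unfolding ce_def
    by (rule sigma_finite_subalgebra.real_cond_exp_le_c[OF sigma_finite_subalgebra_G integrable_f])
       (use f_bounded abs_le_D1 in auto)
  moreover have "AE x in P. -1 \<le> ce n x"
    unfolding ce_def
    by (rule sigma_finite_subalgebra.real_cond_exp_ge_c[OF sigma_finite_subalgebra_G integrable_f])
       (use f_bounded in \<open>auto simp: abs_le_iff\<close>)
  ultimately show ?thesis by eventually_elim auto
qed

lemma integrable_ce_mult: "integrable P (\<lambda>x. ce n x * ce m x)"
  by (intro integrable_bounded_mult ce_measurable ce_bounded)

lemma integrable_ce: "integrable P (ce n)"
  by (rule integrable_const_bound[where B = 1]) (use ce_bounded ce_measurable in auto)

lemma integral_ce_mult:
  assumes "n \<le> m"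
  shows "(\<integral>x. ce m x * ce n x \<partial>P) = ce_sq m"
  unfolding ce_def[of n] ce_sq_def
  using f_measurable ce_measurable_le[OF assms] f_bounded
  by (intro sigma_finite_subalgebra.real_cond_exp_intg(2)[OF sigma_finite_subalgebra_G])
     (auto intro!: integrable_bounded_mult ce_measurable ce_bounded)

lemma ce_sq_eq: "ce_sq n = (\<integral>x. (ce n x)\<^sup>2 \<partial>P)"
  using integral_ce_mult[of n n] by (simp add: power2_eq_square)

lemma integral_ce_diff_square:
  assumes "n \<le> m"
  shows "(\<integral>x. (ce n x - ce m x)\<^sup>2 \<partial>P) = ce_sq n - ce_sq m"
proof -
  have "(\<integral>x. (ce n x - ce m x)\<^sup>2 \<partial>P)
      = (\<integral>x. ce n x * ce n x - 2 * (ce m x * ce n x) + ce m x * ce m x \<partial>P)"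
    by (simp add: power2_eq_square algebra_simps)
  also have "\<dots> = (\<integral>x. ce n x * ce n x \<partial>P) - 2 * (\<integral>x. ce m x * ce n x \<partial>P) + (\<integral>x. ce m x * ce m x \<partial>P)"
    using integrable_ce_mult by simp
  also have "\<dots> = ce_sq n - ce_sq m"
    using integral_ce_mult[OF assms] integral_ce_mult[OF order_refl] by simp
  finally show ?thesis .
qed

lemma ce_sq_tendsto_Inf: "ce_sq \<longlonglongrightarrow> Inf (range ce_sq)"
proof (rule LIMSEQ_decseq_INF)
  show "bdd_below (range ce_sq)" by (auto simp: bdd_below_def ce_sq_eq intro!: exI[of _ 0])
  show "decseq ce_sq"
    unfolding decseq_def
  proof (intro allI impI)
    fix m n :: nat assume "m \<le> n"
    have "0 \<le> (\<integral>x. (ce m x - ce n x)\<^sup>2 \<partial>P)" by simp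
    then show "ce_sq n \<le> ce_sq m" using integral_ce_diff_square[OF \<open>m \<le> n\<close>] by simp
  qed
qed

lemma integral_abs_ce_diff:
  "(\<integral>x. \<bar>ce i x - ce j x\<bar> \<partial>P)\<^sup>2 \<le> \<bar>ce_sq i - ce_sq j\<bar>"
proof -
  have "integrable P (\<lambda>x. (ce i x - ce j x)\<^sup>2)"
  proof (rule integrable_const_bound[where B = 4])
    show "AE x in P. norm ((ce i x - ce j x)\<^sup>2) \<le> 4"
      using ce_bounded[of i] ce_bounded[of j]
    proof eventually_elim
      case (elim x)
      then have "\<bar>ce i x - ce j x\<bar>\<^sup>2 \<le> 2\<^sup>2" by (intro power_mono) auto
      then show ?case by simp
    qed
  qed (use ce_measurable in auto)
  then have "(\<integral>x. \<bar>ce i x - ce j x\<bar> \<partial>P)\<^sup>2 \<le> (\<integral>x. (ce i x - ce j x)\<^sup>2 \<partial>P)"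
    by (intro integral_abs_square_le) (auto intro: integrable_ce)
  moreover have "(\<integral>x. (ce i x - ce j x)\<^sup>2 \<partial>P) = (\<integral>x. (ce j x - ce i x)\<^sup>2 \<partial>P)"
    by (simp add: power2_commute)
  ultimately show ?thesis
    using integral_ce_diff_square[of i j] integral_ce_diff_square[of j i] by (cases "i \<le> j") auto
qed

lemma ce_AE_Cauchy_subseq:
  obtains r where "strict_mono r" "AE x in P. Cauchy (\<lambda>i. ce (r i) x)"
proof (rule cauchy_L1_AE_cauchy_subseq[of P ce])
  fix e :: real assume "0 < e"
  then have "0 < e\<^sup>2" by simp
  from LIMSEQ_imp_Cauchy[OF ce_sq_tendsto_Inf, unfolded Cauchy_def, rule_format, OF this]
  obtain N where N: "\<And>m n. m \<ge> N \<Longrightarrow> n \<ge> N \<Longrightarrow> dist (ce_sq m) (ce_sq n) < e\<^sup>2"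
    by blast
  show "\<exists>N. \<forall>i\<ge>N. \<forall>j\<ge>N. (\<integral>x. norm (ce i x - ce j x) \<partial>P) < e"
  proof (intro exI allI impI)
    fix i j assume "N \<le> i" "N \<le> j"
    then have "(\<integral>x. \<bar>ce i x - ce j x\<bar> \<partial>P)\<^sup>2 < e\<^sup>2"
      using integral_abs_ce_diff[of i j] N[of i j] by (simp add: dist_real_def)
    then show "(\<integral>x. norm (ce i x - ce j x) \<partial>P) < e"
      using \<open>0 < e\<close> by (simp add: power_less_imp_less_base)
  qed
qed (use that integrable_ce in auto)

text \<open>The limit of the subsequence is measurable for every \<open>G n\<close> because it is also the limit of
  the subsequence shifted by \<open>n\<close>; clipping to \<open>[-1, 1]\<close> makes it bounded everywhere.\<close>

lemma ce_subseq_limit: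
  obtains r h where "strict_mono r" "\<And>n. h \<in> borel_measurable (G n)" "\<And>x. \<bar>h x\<bar> \<le> 1"
    "AE x in P. (\<lambda>i. ce (r i) x) \<longlonglongrightarrow> h x"
proof -
  obtain r where r: "strict_mono r" and Cauchy: "AE x in P. Cauchy (\<lambda>i. ce (r i) x)"
    by (rule ce_AE_Cauchy_subseq)
  define l where "l x = lim (\<lambda>i. ce (r i) x)" for x
  define h where "h x = max (-1) (min 1 (l x))" for x
  have "l \<in> borel_measurable (G n)" for n
  proof -
    have "(\<lambda>x. lim (\<lambda>i. ce (r (i + n)) x)) \<in> borel_measurable (G n)"
      using seq_suble[OF r] by (intro borel_measurable_lim_metric ce_measurable_le) (meson le_add2 order_trans)
    moreover have "lim (\<lambda>i. ce (r (i + n)) x) = l x" for x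
    proof -
      have "(\<lambda>i. ce (r (i + n)) x) \<longlonglongrightarrow> L \<longleftrightarrow> (\<lambda>i. ce (r i) x) \<longlonglongrightarrow> L" for L
        by (rule iffI, erule LIMSEQ_offset, erule LIMSEQ_ignore_initial_segment)
      then show ?thesis unfolding l_def lim_def by simp
    qed
    ultimately show ?thesis by simp
  qed
  then have measurable: "h \<in> borel_measurable (G n)" for n
    unfolding h_def by measurable
  have "AE x in P. \<forall>i. \<bar>ce i x\<bar> \<le> 1"
    by (simp add: AE_all_countable ce_bounded)
  with Cauchy have convergent: "AE x in P. (\<lambda>i. ce (r i) x) \<longlonglongrightarrow> h x"
  proof eventually_elim
    case (elim x)
    have lim: "(\<lambda>i. ce (r i) x) \<longlonglongrightarrow> l x"
      using Cauchy_convergent[OF elim(1)] unfolding l_def by (simp add: convergent_LIMSEQ_iff)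
    have "\<bar>l x\<bar> \<le> 1"
      by (rule tendsto_upperbound[OF tendsto_rabs[OF lim]]) (use elim in auto)
    then show ?case using lim by (simp add: h_def)
  qed
  show ?thesis
    by (rule that[OF r, of h]) (use measurable convergent in \<open>auto simp: h_def\<close>)
qed

lemma ce_sq_tendsto_zero:
  assumes orth: "\<And>h. (\<And>n. h \<in> borel_measurable (G n)) \<Longrightarrow> (\<And>x. \<bar>h x\<bar> \<le> 1) \<Longrightarrow>
    (\<integral>x. f x * h x \<partial>P) = 0"
  shows "ce_sq \<longlonglongrightarrow> 0"
proof -
  obtain r h where r: "strict_mono r" and h: "\<And>n. h \<in> borel_measurable (G n)" "\<And>x. \<bar>h x\<bar> \<le> 1"
    and lim: "AE x in P. (\<lambda>i. ce (r i) x) \<longlonglongrightarrow> h x"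
    using ce_subseq_limit by blast
  have "(\<lambda>i. \<integral>x. f x * ce (r i) x \<partial>P) \<longlonglongrightarrow> (\<integral>x. f x * h x \<partial>P)"
  proof (rule integral_dominated_convergence[where w = "\<lambda>_. 1"])
    show "AE x in P. (\<lambda>i. f x * ce (r i) x) \<longlonglongrightarrow> f x * h x"
      using lim by eventually_elim (rule tendsto_mult_left)
    show "AE x in P. norm (f x * ce (r i) x) \<le> 1" for i
      using ce_bounded[of "r i"] by eventually_elim (simp add: abs_mult mult_le_one f_bounded)
  qed (use f_measurable ce_measurable measurable_from_subalg[OF subalgebra_G h(1)] in auto)
  then have "(\<lambda>i. ce_sq (r i)) \<longlonglongrightarrow> 0"
    using orth[OF h] by (simp add: ce_sq_def mult.commute)
  moreover have "(\<lambda>i. ce_sq (r i)) \<longlonglongrightarrow> Inf (range ce_sq)"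
    using LIMSEQ_subseq_LIMSEQ[OF ce_sq_tendsto_Inf r] by (simp add: comp_def)
  ultimately have "Inf (range ce_sq) = 0" using LIMSEQ_unique by blast
  then show ?thesis using ce_sq_tendsto_Inf by simp
qed

lemma decoupling:
  assumes orth: "\<And>h. (\<And>n. h \<in> borel_measurable (G n)) \<Longrightarrow> (\<And>x. \<bar>h x\<bar> \<le> 1) \<Longrightarrow>
    (\<integral>x. f x * h x \<partial>P) = 0"
    and "\<epsilon> > 0"
  shows "\<exists>N. \<forall>E\<in>sets (G N). \<bar>\<integral>x. f x * indicator E x \<partial>P\<bar> < \<epsilon>"
proof -
  obtain N where N: "ce_sq N < \<epsilon>\<^sup>2"
    using order_tendstoD(2)[OF ce_sq_tendsto_zero[OF orth], of "\<epsilon>\<^sup>2"] \<open>\<epsilon> > 0\<close>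
    by (auto simp: eventually_sequentially)
  have "\<bar>\<integral>x. f x * indicator E x \<partial>P\<bar> < \<epsilon>" if E: "E \<in> sets (G N)" for E
  proof -
    have EP: "E \<in> sets P" using subalgebra_G E by (auto simp: subalgebra_def)
    have "(\<integral>x. f x * indicator E x \<partial>P) = (\<integral>x. indicator E x * ce N x \<partial>P)"
      unfolding ce_def
      by (subst sigma_finite_subalgebra.real_cond_exp_intg(2)[OF sigma_finite_subalgebra_G])
         (use E EP f_measurable f_bounded in \<open>auto simp: mult.commute intro!: integrable_bounded_mult\<close>)
    also have "\<bar>\<dots>\<bar> \<le> (\<integral>x. \<bar>indicator E x * ce N x\<bar> \<partial>P)"
      by (rule integral_abs_bound)
    also have "\<dots> \<le> (\<integral>x. \<bar>ce N x\<bar> \<partial>P)"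
    proof (rule integral_mono)
      show "integrable P (\<lambda>x. \<bar>indicator E x * ce N x\<bar>)"
        using integrable_real_mult_indicator[OF EP integrable_ce[of N]] by (simp add: mult.commute)
    qed (auto simp: abs_mult indicator_def intro: integrable_ce)
    also have "\<dots> < \<epsilon>"
    proof -
      have "(\<integral>x. \<bar>ce N x\<bar> \<partial>P)\<^sup>2 \<le> ce_sq N"
        unfolding ce_sq_eq
        using integrable_ce_mult[of N N] by (intro integral_abs_square_le) (auto simp: power2_eq_square integrable_ce)
      with N have "(\<integral>x. \<bar>ce N x\<bar> \<partial>P)\<^sup>2 < \<epsilon>\<^sup>2" by linarith
      then show ?thesis by (rule power_less_imp_less_base) (use \<open>\<epsilon> > 0\<close> in simp)
    qed
    finally show ?thesis .
  qed
  then show ?thesis by blast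
qed

end

section \<open>Tail triviality and mixing of the shifts\<close>

lemma (in finite_measure) measure_sym_diff_triangle:
  assumes "A \<in> sets M" "B \<in> sets M" "C \<in> sets M"
  shows "measure M (sym_diff A C) \<le> measure M (sym_diff A B) + measure M (sym_diff B C)"
proof -
  have "measure M (sym_diff A C) \<le> measure M (sym_diff A B \<union> sym_diff B C)"
    using assms by (intro finite_measure_mono) auto
  also have "\<dots> \<le> measure M (sym_diff A B) + measure M (sym_diff B C)"
    using assms by (intro measure_subadditive) auto
  finally show ?thesis .
qed

lemma (in finite_measure) measure_Int_sym_diff_le:
  assumes "A \<in> sets M" "B \<in> sets M" "D \<in> sets M"
  shows "\<bar>measure M (A \<inter> D) - measure M (B \<inter> D)\<bar> \<le> measure M (sym_diff A B)"
proof -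
  have "measure M (A \<inter> D) \<le> measure M (B \<inter> D) + measure M (sym_diff A B)"
    if "A \<in> sets M" "B \<in> sets M" for A B
  proof -
    have "measure M (A \<inter> D) \<le> measure M ((B \<inter> D) \<union> sym_diff A B)"
      using that assms(3) by (intro finite_measure_mono) auto
    also have "\<dots> \<le> measure M (B \<inter> D) + measure M (sym_diff A B)"
      using that assms(3) by (intro measure_subadditive) auto
    finally show ?thesis .
  qed
  from this[of A B] this[of B A] assms show ?thesis by (simp add: Un_commute abs_le_iff)
qed

lemma (in prob_space) prob_Int_trivial:
  assumes A: "A \<in> events" and D: "D \<in> events" and trivial: "prob A = 0 \<or> prob A = 1"
  shows "prob (A \<inter> D) = prob A * prob D"
  using trivial
proof
  assume "prob A = 0"
  moreover have "prob (A \<inter> D) \<le> prob A" using A by (intro finite_measure_mono) auto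
  ultimately show ?thesis by (simp add: antisym)
next
  assume A1: "prob A = 1"
  have "prob (D - A) \<le> prob (space M - A)"
    using A D sets.sets_into_space[OF D] by (intro finite_measure_mono) auto
  also have "\<dots> = 0" using prob_compl[OF A] A1 by simp
  finally have "prob (D - A) = 0" by (simp add: antisym)
  then show ?thesis using finite_measure_Diff'[OF D A] A1 by (simp add: Int_commute)
qed

lemma (in prob_space) integral_mult_indicator_trivial:
  fixes h :: "'a \<Rightarrow> real"
  assumes h: "h \<in> borel_measurable M" "\<And>x. \<bar>h x\<bar> \<le> 1"
    and trivial: "\<And>B. B \<in> sets borel \<Longrightarrow> prob (h -` B \<inter> space M) = 0 \<or> prob (h -` B \<inter> space M) = 1"
    and D: "D \<in> events"
  shows "(\<integral>x. h x * indicator D x \<partial>M) = expectation h * prob D"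
proof -
  define H where "H = vimage_algebra (space M) h borel"
  have sets_H: "sets H = {h -` B \<inter> space M | B. B \<in> sets borel}"
    unfolding H_def by (rule sets_vimage_algebra2) simp
  have H_events: "sets H \<subseteq> events"
    using measurable_sets[OF h(1)] by (auto simp: sets_H)
  have "subalgebra M H"
    unfolding subalgebra_def using H_events by (simp add: H_def)
  then have H: "sigma_finite_subalgebra M H"
    unfolding sigma_finite_subalgebra_def
    using finite_measure_restr_to_subalg finite_measure_axioms finite_measure_def by blast
  have "AE x in M. real_cond_exp M H (indicator D) x = prob D"
  proof (rule sigma_finite_subalgebra.real_cond_exp_charact[OF H])
    fix A assume A: "A \<in> sets H"
    then have "A \<in> events" using H_events by auto
    moreover have "prob A = 0 \<or> prob A = 1" using A trivial by (auto simp: sets_H)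
    ultimately have "prob (A \<inter> D) = prob A * prob D" using prob_Int_trivial D by blast
    moreover have "(\<integral>x\<in>A. indicator D x \<partial>M) = prob (A \<inter> D)"
      using \<open>A \<in> events\<close> D unfolding set_lebesgue_integral_def
      by (simp add: indicator_inter_arith[symmetric] mult.commute)
    ultimately show "(\<integral>x\<in>A. indicator D x \<partial>M) = (\<integral>x\<in>A. prob D \<partial>M)"
      using \<open>A \<in> events\<close> unfolding set_lebesgue_integral_def by simp
  qed (use D in \<open>auto simp: H_def less_top[symmetric] intro!: integrable_real_indicator\<close>)
  then have "(\<integral>x. h x * real_cond_exp M H (indicator D) x \<partial>M) = (\<integral>x. h x * prob D \<partial>M)"
    by (intro integral_cong_AE) (use h D in auto)
  moreover have "(\<integral>x. h x * indicator D x \<partial>M) = (\<integral>x. h x * real_cond_exp M H (indicator D) x \<partial>M)"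
  proof (rule sigma_finite_subalgebra.real_cond_exp_intg(2)[OF H, symmetric])
    show "integrable M (\<lambda>x. h x * indicator D x)"
      using h D by (intro integrable_bounded_mult) (auto simp: indicator_def)
    show "h \<in> borel_measurable H"
      unfolding H_def by (rule measurable_vimage_algebra1) simp
  qed (use D in auto)
  ultimately show ?thesis by simp
qed

definition cube :: "nat \<Rightarrow> (int ^ 'd) set" where
  "cube n = {w. \<forall>i. \<bar>w $ i\<bar> \<le> int n}"

lemma finite_cube: "finite (cube n)"
proof -
  have "cube n \<subseteq> vec_lambda ` (UNIV \<rightarrow>\<^sub>E {-int n..int n})"
  proof
    fix w :: "int ^ 'd" assume "w \<in> cube n"
    then have "vec_nth w \<in> UNIV \<rightarrow>\<^sub>E {-int n..int n}" by (auto simp: cube_def abs_le_iff minus_le_iff)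
    then show "w \<in> vec_lambda ` (UNIV \<rightarrow>\<^sub>E {-int n..int n})" by (auto intro: image_eqI[of _ _ "vec_nth w"])
  qed
  then show ?thesis by (rule finite_subset) (intro finite_imageI finite_PiE; simp)
qed

lemma cube_mono: "n \<le> m \<Longrightarrow> cube n \<subseteq> cube m"
  by (auto simp: cube_def) (meson dual_order.trans of_nat_mono)

lemma finite_subset_cube: "finite V \<Longrightarrow> \<exists>n. V \<subseteq> cube n"
proof (induction V rule: finite_induct)
  case (insert v V)
  then obtain n where n: "V \<subseteq> cube n" by blast
  define m where "m = Max (range (\<lambda>i. nat \<bar>v $ i\<bar>))"
  have "nat \<bar>v $ i\<bar> \<le> m" for i unfolding m_def by (rule Max_ge) auto
  then have "\<bar>v $ i\<bar> \<le> int m" for i by (metis abs_ge_zero int_nat_eq of_nat_mono)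
  then have "v \<in> cube m" by (simp add: cube_def)
  then have "insert v V \<subseteq> cube (max n m)"
    using n cube_mono[of n "max n m"] cube_mono[of m "max n m"] by auto
  then show ?case by blast
qed simp

definition coord_events :: "'u measure \<Rightarrow> (int ^ 'd) set \<Rightarrow> ((int ^ 'd) \<Rightarrow> 'u) set set" where
  "coord_events Y J = (\<Union>j\<in>J. {(\<lambda>\<omega>. \<omega> j) -` A \<inter> space (config_space Y) | A. A \<in> sets Y})"

lemma sigma_coords_eq: "sigma_coords Y J = sigma_sets (space (config_space Y)) (coord_events Y J)"
  by (simp add: sigma_coords_def coord_events_def)

lemma sigma_coords_mono: "J \<subseteq> K \<Longrightarrow> sigma_coords Y J \<subseteq> sigma_coords Y K"
  unfolding sigma_coords_eq coord_events_def by (intro sigma_sets_mono') auto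

lemma coord_events_subset: "coord_events Y J \<subseteq> sets (config_space Y)"
proof
  fix X assume "X \<in> coord_events Y J"
  then obtain j A where X: "X = (\<lambda>\<omega>. \<omega> j) -` A \<inter> space (config_space Y)" and A: "A \<in> sets Y"
    unfolding coord_events_def by auto
  have "(\<lambda>\<omega>. \<omega> j) \<in> measurable (config_space Y) Y"
    unfolding config_space_def by (rule measurable_component_singleton) simp
  then show "X \<in> sets (config_space Y)" using X A by (simp add: measurable_sets)
qed

lemma sigma_coords_subset: "sigma_coords Y J \<subseteq> sets (config_space Y)"
  unfolding sigma_coords_eq by (rule sets.sigma_sets_subset[OF coord_events_subset])

lemma tail_fieldI:
  fixes A :: "((int ^ 'd) \<Rightarrow> 'u) set"
  assumes "\<And>n. A \<in> sigma_coords Y (UNIV - cube n)"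
  shows "A \<in> tail_field Y"
  unfolding tail_field_def
proof
  fix V :: "(int ^ 'd) set" assume "V \<in> {V. finite V}"
  then obtain n where "V \<subseteq> cube n" using finite_subset_cube by auto
  then show "A \<in> sigma_coords Y (UNIV - V)"
    using assms sigma_coords_mono[of "UNIV - cube n" "UNIV - V" Y] by auto
qed

lemma shift_space: "shift w \<in> space (config_space Y) \<rightarrow> space (config_space Y)"
  by (auto simp: config_space_def space_PiM shift_def)

lemma sigma_coords_shift:
  assumes "X \<in> sigma_coords Y J"
  shows "shift w -` X \<inter> space (config_space Y) \<in> sigma_coords Y ((\<lambda>j. j + w) ` J)"
proof -
  let ?\<Omega> = "space (config_space Y)"
  have "shift w -` X \<inter> ?\<Omega> \<in> {shift w -` A \<inter> ?\<Omega> | A. A \<in> sigma_sets ?\<Omega> (coord_events Y J)}"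
    using assms by (auto simp: sigma_coords_eq)
  also have "\<dots> = sigma_sets ?\<Omega> {shift w -` A \<inter> ?\<Omega> | A. A \<in> coord_events Y J}"
    by (rule sigma_sets_vimage_commute[OF shift_space])
  also have "\<dots> \<subseteq> sigma_sets ?\<Omega> (coord_events Y ((\<lambda>j. j + w) ` J))"
  proof (rule sigma_sets_mono', safe)
    fix A assume "A \<in> coord_events Y J"
    then obtain j C where "j \<in> J" "C \<in> sets Y" and A: "A = (\<lambda>\<omega>. \<omega> j) -` C \<inter> ?\<Omega>"
      unfolding coord_events_def by auto
    moreover have "shift w -` A \<inter> ?\<Omega> = (\<lambda>\<omega>. \<omega> (j + w)) -` C \<inter> ?\<Omega>"
      unfolding A using shift_space[of w Y] by (auto simp: shift_def)
    ultimately show "shift w -` A \<inter> ?\<Omega> \<in> coord_events Y ((\<lambda>j. j + w) ` J)"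
      unfolding coord_events_def by blast
  qed
  finally show ?thesis by (simp add: sigma_coords_eq)
qed

locale config_prob = prob_space P for Y :: "'u measure" and P :: "((int ^ 'd) \<Rightarrow> 'u) measure" +
  assumes sets_P: "sets P = sets (config_space Y)"
begin

lemma space_P: "space P = space (config_space Y)"
  by (rule sets_eq_imp_space_eq[OF sets_P])

lemma sigma_coords_events: "sigma_coords Y J \<subseteq> events"
  using sigma_coords_subset sets_P by blast

lemma space_minus_sigma_coords: "B \<in> sigma_coords Y J \<Longrightarrow> space P - B \<in> sigma_coords Y J"
  unfolding sigma_coords_eq space_P by (rule sigma_sets.Compl)

lemma Un_sigma_coords:
  "A \<in> sigma_coords Y J \<Longrightarrow> B \<in> sigma_coords Y K \<Longrightarrow> A \<union> B \<in> sigma_coords Y (J \<union> K)"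
  using sigma_coords_mono[of J "J \<union> K" Y] sigma_coords_mono[of K "J \<union> K" Y]
  unfolding sigma_coords_eq by (auto intro: sigma_sets_Un)

definition approximable :: "((int ^ 'd) \<Rightarrow> 'u) set \<Rightarrow> bool" where
  "approximable B \<longleftrightarrow> (\<forall>\<epsilon>>0. \<exists>J B'. finite J \<and> B' \<in> sigma_coords Y J \<and> prob (sym_diff B B') < \<epsilon>)"

lemma approximable_compl:
  assumes "B \<in> events" "approximable B"
  shows "approximable (space P - B)"
  unfolding approximable_def
proof (intro allI impI)
  fix \<epsilon> :: real assume "\<epsilon> > 0"
  then obtain J B' where J: "finite J" "B' \<in> sigma_coords Y J" and B': "prob (sym_diff B B') < \<epsilon>"
    using assms(2) by (auto simp: approximable_def)
  have "prob (sym_diff (space P - B) (space P - B')) \<le> prob (sym_diff B B')"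
    using assms(1) sigma_coords_events J(2) by (intro finite_measure_mono) auto
  with J B' space_minus_sigma_coords[OF J(2)]
  show "\<exists>J B''. finite J \<and> B'' \<in> sigma_coords Y J \<and> prob (sym_diff (space P - B) B'') < \<epsilon>"
    by (intro exI[of _ J] exI[of _ "space P - B'"]) auto
qed

lemma approximable_Un:
  assumes "A \<in> events" "B \<in> events" "approximable A" "approximable B"
  shows "approximable (A \<union> B)"
  unfolding approximable_def
proof (intro allI impI)
  fix \<epsilon> :: real assume "\<epsilon> > 0"
  then obtain J A' K B' where J: "finite J" "A' \<in> sigma_coords Y J" "prob (sym_diff A A') < \<epsilon>/2"
    and K: "finite K" "B' \<in> sigma_coords Y K" "prob (sym_diff B B') < \<epsilon>/2"
    using assms(3,4) unfolding approximable_def by (meson half_gt_zero)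
  have events: "A' \<in> events" "B' \<in> events" using J(2) K(2) sigma_coords_events by auto
  have "prob (sym_diff (A \<union> B) (A' \<union> B')) \<le> prob (sym_diff A A' \<union> sym_diff B B')"
    using assms events by (intro finite_measure_mono) auto
  also have "\<dots> \<le> prob (sym_diff A A') + prob (sym_diff B B')"
    using assms events by (intro measure_subadditive) auto
  finally show "\<exists>J B''. finite J \<and> B'' \<in> sigma_coords Y J \<and> prob (sym_diff (A \<union> B) B'') < \<epsilon>"
    using J K Un_sigma_coords[OF J(2) K(2)] by (intro exI[of _ "J \<union> K"] exI[of _ "A' \<union> B'"]) auto
qed

lemma approximable_UN_lessThan:
  fixes A :: "nat \<Rightarrow> ((int ^ 'd) \<Rightarrow> 'u) set" and N :: nat
  assumes "range A \<subseteq> events" "\<And>i. approximable (A i)"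
  shows "approximable (\<Union>i<N. A i)"
proof (induction N)
  case 0
  have "{} \<in> sigma_coords Y {}" by (simp add: sigma_coords_eq sigma_sets.Empty)
  then show ?case by (auto simp: approximable_def intro!: exI[of _ "{}"])
next
  case (Suc N)
  then show ?case
    using assms by (simp add: lessThan_Suc Un_commute approximable_Un sets.finite_UN subset_eq)
qed

lemma approximable_UN:
  fixes A :: "nat \<Rightarrow> ((int ^ 'd) \<Rightarrow> 'u) set"
  assumes A: "range A \<subseteq> events" and approx: "\<And>i. approximable (A i)"
  shows "approximable (\<Union>i. A i)"
  unfolding approximable_def
proof (intro allI impI)
  fix \<epsilon> :: real assume "\<epsilon> > 0"
  define U where "U N = (\<Union>i<N. A i)" for N
  have U: "U N \<in> events" for N using A unfolding U_def by auto
  have "(\<lambda>N. prob (U N)) \<longlonglongrightarrow> prob (\<Union>N. U N)"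
    using U by (intro finite_Lim_measure_incseq) (auto simp: incseq_def U_def intro: less_le_trans)
  moreover have "(\<Union>N. U N) = (\<Union>i. A i)" by (auto simp: U_def)
  ultimately have "(\<lambda>N. prob (U N)) \<longlonglongrightarrow> prob (\<Union>i. A i)" by simp
  from order_tendstoD(1)[OF this, of "prob (\<Union>i. A i) - \<epsilon>/2"] \<open>\<epsilon> > 0\<close>
  obtain N where N: "prob (\<Union>i. A i) - \<epsilon>/2 < prob (U N)"
    by (auto simp: eventually_sequentially)
  obtain J B' where J: "finite J" "B' \<in> sigma_coords Y J" and B': "prob (sym_diff (U N) B') < \<epsilon>/2"
    using approximable_UN_lessThan[OF A approx, of N] \<open>\<epsilon> > 0\<close> unfolding approximable_def U_def
    by (meson half_gt_zero)
  have AU: "(\<Union>i. A i) \<in> events" using A by auto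
  have "prob (sym_diff (\<Union>i. A i) (U N)) = prob (\<Union>i. A i) - prob (U N)"
    using AU U by (subst finite_measure_Diff[symmetric]) (auto simp: U_def intro!: arg_cong[where f = prob])
  then have "prob (sym_diff (\<Union>i. A i) B') < \<epsilon>"
    using measure_sym_diff_triangle[OF AU U[of N] sigma_coords_events[THEN subsetD, OF J(2)]] N B' by linarith
  with J show "\<exists>J B'. finite J \<and> B' \<in> sigma_coords Y J \<and> prob (sym_diff (\<Union>i. A i) B') < \<epsilon>"
    by blast
qed

lemma approximable_events:
  assumes "B \<in> events"
  shows "approximable B"
proof -
  have "B \<in> sigma_sets (space P) {{f \<in> space P. f i \<in> A} | i A. A \<in> sets Y}"
    using assms sets_P space_P unfolding config_space_def by (simp add: sets_PiM_single space_PiM)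
  then show ?thesis
  proof (induction rule: sigma_sets.induct)
    case (Basic B)
    then obtain i A where B: "B = {f \<in> space P. f i \<in> A}" and A: "A \<in> sets Y" by auto
    then have "B \<in> coord_events Y {i}" unfolding coord_events_def space_P by auto
    then have "B \<in> sigma_coords Y {i}" unfolding sigma_coords_eq by (rule sigma_sets.Basic)
    then show ?case by (auto simp: approximable_def intro!: exI[of _ "{i}"] exI[of _ B])
  next
    case Empty
    have "{} \<in> sigma_coords Y {}" by (simp add: sigma_coords_eq sigma_sets.Empty)
    then show ?case by (auto simp: approximable_def intro!: exI[of _ "{}"])
  next
    case (Compl B)
    then show ?case
      using sets_P space_P unfolding config_space_def
      by (intro approximable_compl) (auto simp: sets_PiM_single space_PiM)
  next
    case (Union A)
    then show ?case
      using sets_P space_P unfolding config_space_def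
      by (intro approximable_UN) (auto simp: sets_PiM_single space_PiM)
  qed
qed

definition coord_algebra :: "(int ^ 'd) set \<Rightarrow> ((int ^ 'd) \<Rightarrow> 'u) measure" where
  "coord_algebra J = sigma (space P) (coord_events Y J)"

lemma sets_coord_algebra: "sets (coord_algebra J) = sigma_coords Y J"
  unfolding coord_algebra_def sigma_coords_eq space_P
  by (rule sets_measure_of) (use coord_events_subset sets.sets_into_space in blast)

lemma subalgebra_coord_algebra: "subalgebra P (coord_algebra J)"
  unfolding subalgebra_def using sets_coord_algebra sigma_coords_events
  by (simp add: coord_algebra_def space_measure_of_conv)

end

locale tail_trivial_config = config_prob Y P for Y :: "'u measure" and P :: "((int ^ 'd) \<Rightarrow> 'u) measure" +
  assumes tail_trivial: "tail_trivial Y P"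
begin

lemma integral_mult_indicator_tail:
  assumes h: "\<And>n. h \<in> borel_measurable (coord_algebra (UNIV - cube n))" "\<And>x. \<bar>h x\<bar> \<le> 1"
    and D: "D \<in> events"
  shows "(\<integral>x. h x * indicator D x \<partial>P) = expectation h * prob D"
proof (rule integral_mult_indicator_trivial[OF _ h(2) _ D])
  show "h \<in> borel_measurable P" by (rule measurable_from_subalg[OF subalgebra_coord_algebra h(1)])
  fix B :: "real set" assume "B \<in> sets borel"
  then have "h -` B \<inter> space P \<in> tail_field Y"
    using measurable_sets[OF h(1)] subalgebra_coord_algebra
    by (intro tail_fieldI) (auto simp: sets_coord_algebra subalgebra_def)
  then show "prob (h -` B \<inter> space P) = 0 \<or> prob (h -` B \<inter> space P) = 1"
    using tail_trivial unfolding tail_trivial_def by blast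
qed

lemma tail_decoupling:
  assumes D: "D \<in> events" and "\<epsilon> > 0"
  shows "\<exists>n. \<forall>E\<in>sigma_coords Y (UNIV - cube n). \<bar>prob (D \<inter> E) - prob D * prob E\<bar> < \<epsilon>"
proof -
  define f where "f x = indicator D x - prob D" for x
  define G where "G n = coord_algebra (UNIV - cube n)" for n
  interpret cond_exp_decreasing P G f
  proof
    show "subalgebra P (G n)" for n unfolding G_def by (rule subalgebra_coord_algebra)
    show "sets (G (Suc n)) \<subseteq> sets (G n)" for n
      unfolding G_def sets_coord_algebra by (intro sigma_coords_mono) (use cube_mono[of n "Suc n"] in auto)
    show "f \<in> borel_measurable P" unfolding f_def using D by measurable
    show "\<bar>f x\<bar> \<le> 1" for x unfolding f_def by (simp add: indicator_def)
  qed
  have orth: "(\<integral>x. f x * h x \<partial>P) = 0"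
    if h: "\<And>n. h \<in> borel_measurable (G n)" "\<And>x. \<bar>h x\<bar> \<le> 1" for h
  proof -
    have "integrable P h"
      using measurable_from_subalg[OF subalgebra_G h(1)] h(2) by (intro integrable_const_bound) auto
    moreover have "integrable P (\<lambda>x. h x * indicator D x)"
      using \<open>integrable P h\<close> D by (simp add: integrable_real_mult_indicator)
    ultimately have "(\<integral>x. f x * h x \<partial>P) = (\<integral>x. h x * indicator D x \<partial>P) - prob D * expectation h"
      unfolding f_def by (simp add: algebra_simps)
    then show ?thesis using integral_mult_indicator_tail[OF h[unfolded G_def] D] by simp
  qed
  obtain n where n: "\<And>E. E \<in> sets (G n) \<Longrightarrow> \<bar>\<integral>x. f x * indicator E x \<partial>P\<bar> < \<epsilon>"
    using decoupling[OF orth \<open>\<epsilon> > 0\<close>] by blast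
  have integral_eq: "(\<integral>x. f x * indicator E x \<partial>P) = prob (D \<inter> E) - prob D * prob E"
    if "E \<in> events" for E
  proof -
    have "(\<integral>x. f x * indicator E x \<partial>P) = (\<integral>x. indicator (D \<inter> E) x - prob D * indicator E x \<partial>P)"
      unfolding f_def by (intro Bochner_Integration.integral_cong) (auto simp: indicator_def)
    then show ?thesis
      using D that by (simp add: less_top[symmetric] integrable_real_indicator)
  qed
  show ?thesis
  proof (intro exI ballI)
    fix E :: "((int ^ 'd) \<Rightarrow> 'u) set" assume E: "E \<in> sigma_coords Y (UNIV - cube n)"
    then have "E \<in> events" using sigma_coords_events by auto
    with E n[of E] integral_eq show "\<bar>prob (D \<inter> E) - prob D * prob E\<bar> < \<epsilon>"
      by (simp add: G_def sets_coord_algebra)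
  qed
qed

end

locale stationary_tail_trivial = tail_trivial_config Y P for Y :: "'u measure" and P :: "((int ^ 'd) \<Rightarrow> 'u) measure" +
  assumes mpt_shift: "mpt P (shift v)"
begin

lemma measurable_shift: "shift v \<in> measurable P P"
  using mpt_shift by (simp add: mpt_def)

lemma prob_shift_vimage: "X \<in> events \<Longrightarrow> prob (shift v -` X \<inter> space P) = prob X"
  using mpt_shift by (simp add: mpt_def measure_def)

lemma shift_vimage_far:
  assumes B: "B \<in> sigma_coords Y J" and w: "w \<notin> (\<lambda>(l, j). l - j) ` (cube r \<times> J)"
  shows "shift w -` B \<inter> space P \<in> sigma_coords Y (UNIV - cube r)"
proof -
  have far: "(\<lambda>j. j + w) ` J \<subseteq> UNIV - cube r"
  proof
    fix x assume "x \<in> (\<lambda>j. j + w) ` J"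
    then obtain j where j: "j \<in> J" "x = j + w" by auto
    have "x \<notin> cube r"
    proof
      assume "x \<in> cube r"
      then have "w \<in> (\<lambda>(l, j). l - j) ` (cube r \<times> J)" using j by (auto intro!: image_eqI[of _ _ "(x, j)"])
      with w show False by simp
    qed
    then show "x \<in> UNIV - cube r" by simp
  qed
  show ?thesis
    using sigma_coords_shift[OF B, of w] sigma_coords_mono[OF far] unfolding space_P by blast
qed

text \<open>Mixing of the shifts: approximate \<open>B\<close> by a set depending on finitely many coordinates, which
  a far shift moves outside the cube on which \<open>D\<close> is decoupled.\<close>

lemma shift_mixing:
  assumes B: "B \<in> events" and D: "D \<in> events" and "\<epsilon> > 0"
  shows "\<exists>W. finite W \<and> (\<forall>w. w \<notin> W \<longrightarrow>
     \<bar>prob (shift w -` B \<inter> space P \<inter> D) - prob B * prob D\<bar> < \<epsilon>)"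
proof -
  obtain J B' where J: "finite J" and B': "B' \<in> sigma_coords Y J" and approx: "prob (sym_diff B B') < \<epsilon>/3"
    using approximable_events[OF B] \<open>\<epsilon> > 0\<close> unfolding approximable_def by (meson zero_less_divide_iff zero_less_numeral)
  have B'_events: "B' \<in> events" using B' sigma_coords_events by auto
  obtain r where r: "\<forall>E\<in>sigma_coords Y (UNIV - cube r). \<bar>prob (D \<inter> E) - prob D * prob E\<bar> < \<epsilon>/3"
    using tail_decoupling[OF D] \<open>\<epsilon> > 0\<close> by (meson zero_less_divide_iff zero_less_numeral)
  have "\<bar>prob (shift w -` B \<inter> space P \<inter> D) - prob B * prob D\<bar> < \<epsilon>"
    if w: "w \<notin> (\<lambda>(l, j). l - j) ` (cube r \<times> J)" for w
  proof -
    define X where "X = shift w -` B \<inter> space P"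
    define E where "E = shift w -` B' \<inter> space P"
    have E: "E \<in> sigma_coords Y (UNIV - cube r)" unfolding E_def by (rule shift_vimage_far[OF B' w])
    have events: "X \<in> events" "E \<in> events"
      unfolding X_def E_def using B B'_events measurable_shift by (auto intro: measurable_sets)
    have "prob (sym_diff X E) = prob (shift w -` sym_diff B B' \<inter> space P)"
      unfolding X_def E_def by (rule arg_cong[where f = prob]) auto
    also have "\<dots> = prob (sym_diff B B')" using B B'_events by (intro prob_shift_vimage) auto
    finally have "prob (sym_diff X E) = prob (sym_diff B B')" .
    then have close: "\<bar>prob (X \<inter> D) - prob (E \<inter> D)\<bar> < \<epsilon>/3"
      using measure_Int_sym_diff_le[OF events D] approx by linarith
    have decoupled: "\<bar>prob (D \<inter> E) - prob D * prob E\<bar> < \<epsilon>/3" using r E by blast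
    have approx_prob: "\<bar>prob D * (prob B' - prob B)\<bar> < \<epsilon>/3"
    proof -
      have "\<bar>prob (B' \<inter> space P) - prob (B \<inter> space P)\<bar> \<le> prob (sym_diff B' B)"
        by (rule measure_Int_sym_diff_le[OF B'_events B sets.top])
      then have "\<bar>prob B' - prob B\<bar> < \<epsilon>/3"
        using approx B B'_events by (simp add: Int_absorb2 sets.sets_into_space Un_commute)
      moreover have "\<bar>prob D * (prob B' - prob B)\<bar> \<le> \<bar>prob B' - prob B\<bar>"
        by (simp add: abs_mult mult_left_le_one_le)
      ultimately show ?thesis by linarith
    qed
    have "prob E = prob B'" unfolding E_def by (rule prob_shift_vimage[OF B'_events])
    then have "prob (X \<inter> D) - prob B * prob D = (prob (X \<inter> D) - prob (E \<inter> D))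
        + (prob (D \<inter> E) - prob D * prob E) + prob D * (prob B' - prob B)"
      by (simp add: Int_commute algebra_simps)
    then have "\<bar>prob (X \<inter> D) - prob B * prob D\<bar> < \<epsilon>"
      using close decoupled approx_prob by linarith
    then show ?thesis by (simp add: X_def)
  qed
  moreover have "finite ((\<lambda>(l, j). l - j) ` (cube r \<times> J))" using finite_cube J by auto
  ultimately show ?thesis by blast
qed

end

section \<open>The skew product\<close>

definition displacement :: "int ^ 'd \<Rightarrow> int ^ 'd \<Rightarrow> int \<times> int \<Rightarrow> int ^ 'd" where
  "displacement v1 v2 k = fst k *s v1 + snd k *s v2"

lemma shift_shift: "shift a (shift b \<omega>) = shift (a + b) \<omega>"
  by (simp add: shift_def add.assoc)

lemma theta_eq_shift: "theta v1 v2 k = shift (displacement v1 v2 k)"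
  by (rule ext) (simp add: theta_def displacement_def shift_shift)

lemma displacement_add: "displacement v1 v2 (a + b) = displacement v1 v2 a + displacement v1 v2 b"
  by (simp add: displacement_def vec_eq_iff algebra_simps)

lemma inj_displacement:
  assumes "lin_indep2 v1 v2"
  shows "inj (displacement v1 v2)"
proof (rule injI)
  fix a b assume "displacement v1 v2 a = displacement v1 v2 b"
  then have "(fst a - fst b) *s v1 + (snd a - snd b) *s v2 = 0"
    by (simp add: displacement_def vec_eq_iff algebra_simps)
  then have "fst a - fst b = 0 \<and> snd a - snd b = 0"
    using assms unfolding lin_indep2_def by blast
  then show "a = b" by (simp add: prod_eq_iff)
qed

lemma skew_funpow:
  "(skew v1 v2 \<tau> \<kappa> ^^ n) (t, \<omega>) = ((\<tau> ^^ n) t, shift (displacement v1 v2 (cocycle_sum \<tau> \<kappa> n t)) \<omega>)"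
  by (induction n)
     (simp_all add: skew_def theta_eq_shift shift_shift cocycle_sum_def displacement_add add.commute,
      simp add: shift_def displacement_def)

lemma measure_pair_measure_eq_integral:
  assumes "prob_space M" "prob_space N" and Z: "Z \<in> sets (M \<Otimes>\<^sub>M N)"
  shows "measure (M \<Otimes>\<^sub>M N) Z = (\<integral>t. measure N (Pair t -` Z) \<partial>M)"
proof -
  interpret M: prob_space M by fact
  interpret N: prob_space N by fact
  have measurable: "(\<lambda>t. measure N (Pair t -` Z)) \<in> borel_measurable M"
    unfolding measure_def by (intro borel_measurable_enn2real N.measurable_emeasure_Pair[OF Z])
  have "emeasure (M \<Otimes>\<^sub>M N) Z = (\<integral>\<^sup>+ t. ennreal (measure N (Pair t -` Z)) \<partial>M)"
    using N.emeasure_pair_measure_alt[OF Z] by (simp add: N.emeasure_eq_measure)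
  also have "\<dots> = ennreal (\<integral>t. measure N (Pair t -` Z) \<partial>M)"
    using measurable by (intro nn_integral_eq_integral M.integrable_const_bound[where B = 1]) auto
  finally show ?thesis by (simp add: measure_def)
qed

locale skew_product = stationary_tail_trivial Y P for Y :: "'u measure" and P :: "((int ^ 'd) \<Rightarrow> 'u) measure" +
  fixes M :: "'a measure" and \<tau> :: "'a \<Rightarrow> 'a" and \<kappa> :: "'a \<Rightarrow> int \<times> int" and v1 v2 :: "int ^ 'd"
  assumes prob_space_M: "prob_space M" and mpt_\<tau>: "mpt M \<tau>"
    and measurable_\<kappa>: "\<kappa> \<in> measurable M (count_space UNIV)"
    and lin_indep: "lin_indep2 v1 v2"
    and transient: "AE t in M. filterlim (\<lambda>n. maxnorm2 (cocycle_sum \<tau> \<kappa> n t)) at_top sequentially"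
begin

sublocale M: prob_mpt M \<tau>
  using prob_space_M mpt_\<tau> by (simp add: prob_mpt_def prob_mpt_axioms_def)

abbreviation "S \<equiv> skew v1 v2 \<tau> \<kappa>"
abbreviation "W \<equiv> displacement v1 v2"

lemma measurable_cocycle_sum: "cocycle_sum \<tau> \<kappa> n \<in> measurable M (count_space UNIV)"
proof (induction n)
  case (Suc n)
  have "(\<lambda>t. (cocycle_sum \<tau> \<kappa> n t, \<kappa> ((\<tau> ^^ n) t))) \<in> measurable M (count_space UNIV \<Otimes>\<^sub>M count_space UNIV)"
    using Suc measurable_comp[OF M.measurable_T_funpow measurable_\<kappa>] by (auto simp: comp_def)
  then have "(\<lambda>t. (cocycle_sum \<tau> \<kappa> n t, \<kappa> ((\<tau> ^^ n) t))) \<in> measurable M (count_space UNIV)"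
    by (simp add: pair_measure_countable)
  from measurable_comp[OF this measurable_count_space[of "\<lambda>p. fst p + snd p"]] show ?case
    by (simp add: comp_def cocycle_sum_def)
qed (simp add: cocycle_sum_def)

lemma measurable_skew: "S \<in> measurable (M \<Otimes>\<^sub>M P) (M \<Otimes>\<^sub>M P)"
proof -
  have shift: "(\<lambda>x. shift (W (fst x)) (snd x)) \<in> measurable (count_space UNIV \<Otimes>\<^sub>M P) P"
    using measurable_shift by (intro measurable_pair_measure_countable1) auto
  have "(\<lambda>x. (\<kappa> (fst x), snd x)) \<in> measurable (M \<Otimes>\<^sub>M P) (count_space UNIV \<Otimes>\<^sub>M P)"
  proof (rule measurable_Pair)
    show "(\<lambda>x. \<kappa> (fst x)) \<in> measurable (M \<Otimes>\<^sub>M P) (count_space UNIV)"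
      using measurable_comp[OF measurable_fst measurable_\<kappa>] by (simp add: comp_def)
  qed simp
  from measurable_comp[OF this shift]
  have snd_part: "(\<lambda>x. shift (W (\<kappa> (fst x))) (snd x)) \<in> measurable (M \<Otimes>\<^sub>M P) P"
    by (simp add: comp_def)
  have fst_part: "(\<lambda>x. \<tau> (fst x)) \<in> measurable (M \<Otimes>\<^sub>M P) M"
    using measurable_comp[OF measurable_fst M.measurable_T_funpow[of 1]] by (simp add: comp_def)
  have "S = (\<lambda>x :: 'a \<times> ((int ^ 'd) \<Rightarrow> 'u). (\<tau> (fst x), shift (W (\<kappa> (fst x))) (snd x)))"
    by (auto simp: skew_def theta_eq_shift)
  then show ?thesis using measurable_Pair[OF fst_part snd_part] by simp
qed

text \<open>Fubini: the section of \<open>S\<^sup>-\<^sup>1 X\<close> at \<open>t\<close> is a shift of the section of \<open>X\<close> at \<open>\<tau> t\<close>, and shifts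
  preserve \<open>P\<close>.\<close>

lemma mpt_skew: "mpt (M \<Otimes>\<^sub>M P) S"
  unfolding mpt_def
proof (intro conjI ballI)
  fix X assume X: "X \<in> sets (M \<Otimes>\<^sub>M P)"
  define F where "F s = emeasure P (Pair s -` X)" for s
  have F: "F \<in> borel_measurable M" unfolding F_def by (rule measurable_emeasure_Pair[OF X])
  have "emeasure P (Pair t -` (S -` X \<inter> space (M \<Otimes>\<^sub>M P))) = F (\<tau> t)" if t: "t \<in> space M" for t
  proof -
    have "Pair t -` (S -` X \<inter> space (M \<Otimes>\<^sub>M P)) = shift (W (\<kappa> t)) -` (Pair (\<tau> t) -` X) \<inter> space P"
      using t by (auto simp: skew_def theta_eq_shift space_pair_measure)
    then show ?thesis
      using mpt_shift sets_Pair1[OF X] by (simp add: mpt_def F_def)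
  qed
  then have "emeasure (M \<Otimes>\<^sub>M P) (S -` X \<inter> space (M \<Otimes>\<^sub>M P)) = (\<integral>\<^sup>+ t. F (\<tau> t) \<partial>M)"
    unfolding emeasure_pair_measure_alt[OF measurable_sets[OF measurable_skew X]]
    by (rule nn_integral_cong)
  also have "\<dots> = (\<integral>\<^sup>+ t. F t \<partial>distr M M \<tau>)"
    using F M.measurable_T_funpow[of 1] by (simp add: nn_integral_distr)
  also have "\<dots> = emeasure (M \<Otimes>\<^sub>M P) X"
    unfolding mpt_distr[OF mpt_\<tau>] F_def by (rule emeasure_pair_measure_alt[OF X, symmetric])
  finally show "emeasure (M \<Otimes>\<^sub>M P) (S -` X \<inter> space (M \<Otimes>\<^sub>M P)) = emeasure (M \<Otimes>\<^sub>M P) X" .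
qed (rule measurable_skew)

sublocale MP: prob_mpt "M \<Otimes>\<^sub>M P" S
  unfolding prob_mpt_def prob_mpt_axioms_def
  using prob_space_pair[OF prob_space_M prob_space_axioms] mpt_skew by simp

lemma measure_Times: "A \<in> sets M \<Longrightarrow> B \<in> events \<Longrightarrow> measure (M \<Otimes>\<^sub>M P) (A \<times> B) = measure M A * prob B"
  by (simp add: measure_def emeasure_pair_measure_Times enn2real_mult)

lemma corr_skew_Times:
  assumes A: "A \<in> sets M" and C: "C \<in> sets M" and B: "B \<in> events" and D: "D \<in> events"
  shows "corr (M \<Otimes>\<^sub>M P) S n (A \<times> B) (C \<times> D) =
    (\<integral>t. indicator C t * indicator A ((\<tau> ^^ n) t) * prob (shift (W (cocycle_sum \<tau> \<kappa> n t)) -` B \<inter> space P \<inter> D) \<partial>M)"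
proof -
  let ?Z = "(S ^^ n) -` (A \<times> B) \<inter> space (M \<Otimes>\<^sub>M P) \<inter> (C \<times> D)"
  have Z: "?Z \<in> sets (M \<Otimes>\<^sub>M P)"
    using MP.sets_vimage_funpow A B C D by auto
  have "prob (Pair t -` ?Z) =
      indicator C t * indicator A ((\<tau> ^^ n) t) * prob (shift (W (cocycle_sum \<tau> \<kappa> n t)) -` B \<inter> space P \<inter> D)"
    if "t \<in> space M" for t
  proof -
    have "Pair t -` ?Z =
        (if t \<in> C \<and> (\<tau> ^^ n) t \<in> A then shift (W (cocycle_sum \<tau> \<kappa> n t)) -` B \<inter> space P \<inter> D else {})"
      using that by (auto simp: skew_funpow space_pair_measure)
    then show ?thesis by (simp add: indicator_def)
  qed
  then show ?thesis
    unfolding corr_def measure_pair_measure_eq_integral[OF prob_space_M prob_space_axioms Z]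
    by (rule Bochner_Integration.integral_cong[OF refl])
qed

text \<open>By transience the displacement along the orbit of \<open>t\<close> eventually leaves every finite set,
  where the mixing of the shifts applies (the displacement map is injective).\<close>

lemma decorrelation_along_orbit:
  assumes B: "B \<in> events" and D: "D \<in> events"
  shows "AE t in M. (\<lambda>n. prob (shift (W (cocycle_sum \<tau> \<kappa> n t)) -` B \<inter> space P \<inter> D) - prob B * prob D)
    \<longlonglongrightarrow> 0"
  using transient
proof eventually_elim
  case (elim t)
  show ?case
    unfolding tendsto_iff
  proof (intro allI impI)
    fix \<epsilon> :: real assume "\<epsilon> > 0"
    then obtain W0 where "finite W0" and mixing: "\<And>w. w \<notin> W0 \<Longrightarrow>
        \<bar>prob (shift w -` B \<inter> space P \<inter> D) - prob B * prob D\<bar> < \<epsilon>"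
      using shift_mixing[OF B D] by blast
    define R where "R = Max (insert 0 (maxnorm2 ` (W -` W0)))"
    have "finite (W -` W0)" using \<open>finite W0\<close> inj_displacement[OF lin_indep] by (rule finite_vimageI)
    then have R: "k \<in> W -` W0 \<Longrightarrow> maxnorm2 k \<le> R" for k unfolding R_def by (intro Max_ge) auto
    have "eventually (\<lambda>n. R + 1 \<le> maxnorm2 (cocycle_sum \<tau> \<kappa> n t)) sequentially"
      using elim unfolding filterlim_at_top by blast
    then show "eventually (\<lambda>n. dist (prob (shift (W (cocycle_sum \<tau> \<kappa> n t)) -` B \<inter> space P \<inter> D)
        - prob B * prob D) 0 < \<epsilon>) sequentially"
    proof eventually_elim
      case (elim n)
      then have "W (cocycle_sum \<tau> \<kappa> n t) \<notin> W0" using R by fastforce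
      then show ?case using mixing by (simp add: dist_real_def)
    qed
  qed
qed

lemma measurable_prob_shift_cocycle:
  "(\<lambda>t. prob (shift (W (cocycle_sum \<tau> \<kappa> n t)) -` B \<inter> space P \<inter> D)) \<in> borel_measurable M"
proof -
  have "(\<lambda>k. prob (shift (W k) -` B \<inter> space P \<inter> D)) \<in> measurable (count_space UNIV) borel"
    by simp
  from measurable_comp[OF measurable_cocycle_sum this] show ?thesis by (simp add: comp_def)
qed

lemma corr_skew_Times_defect:
  assumes A: "A \<in> sets M" and C: "C \<in> sets M" and B: "B \<in> events" and D: "D \<in> events"
  shows "corr (M \<Otimes>\<^sub>M P) S n (A \<times> B) (C \<times> D) - prob B * prob D * corr M \<tau> n A C =
    (\<integral>t. indicator C t * indicator A ((\<tau> ^^ n) t) *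
      (prob (shift (W (cocycle_sum \<tau> \<kappa> n t)) -` B \<inter> space P \<inter> D) - prob B * prob D) \<partial>M)"
proof -
  let ?ind = "\<lambda>t. indicator C t * indicator A ((\<tau> ^^ n) t) :: real"
  let ?p = "\<lambda>t. prob (shift (W (cocycle_sum \<tau> \<kappa> n t)) -` B \<inter> space P \<inter> D)"
  have ind: "?ind \<in> borel_measurable M" "\<And>t. \<bar>?ind t\<bar> \<le> 1"
    using M.borel_measurable_indicator_funpow[OF A C] by (auto simp: indicator_def)
  have "integrable M ?ind"
    by (rule M.integrable_const_bound[where B = 1]) (use ind in auto)
  moreover have "integrable M (\<lambda>t. ?ind t * ?p t)"
    by (rule M.integrable_bounded_mult) (use ind measurable_prob_shift_cocycle in auto)
  moreover have "(\<integral>t. ?ind t * (?p t - prob B * prob D) \<partial>M) = (\<integral>t. ?ind t * ?p t - prob B * prob D * ?ind t \<partial>M)"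
    by (simp add: algebra_simps)
  ultimately show ?thesis
    by (simp add: corr_skew_Times[OF A C B D] M.corr_eq_integral[OF A C])
qed

lemma corr_skew_Times_asymptotic:
  assumes A: "A \<in> sets M" and C: "C \<in> sets M" and B: "B \<in> events" and D: "D \<in> events"
  shows "(\<lambda>n. corr (M \<Otimes>\<^sub>M P) S n (A \<times> B) (C \<times> D) - prob B * prob D * corr M \<tau> n A C) \<longlonglongrightarrow> 0"
proof -
  define \<phi> where "\<phi> n t = prob (shift (W (cocycle_sum \<tau> \<kappa> n t)) -` B \<inter> space P \<inter> D) - prob B * prob D"
    for n t
  have \<phi>: "\<phi> n \<in> borel_measurable M" "\<bar>\<phi> n t\<bar> \<le> 1" for n t
  proof -
    show "\<phi> n \<in> borel_measurable M" unfolding \<phi>_def[abs_def] using measurable_prob_shift_cocycle by simp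
    let ?X = "shift (W (cocycle_sum \<tau> \<kappa> n t)) -` B \<inter> space P \<inter> D"
    have "0 \<le> prob B * prob D" "prob B * prob D \<le> 1" "0 \<le> prob ?X" "prob ?X \<le> 1"
      by (auto intro: mult_le_one)
    then show "\<bar>\<phi> n t\<bar> \<le> 1" unfolding \<phi>_def abs_le_iff by (intro conjI) linarith+
  qed
  have bound: "norm (corr (M \<Otimes>\<^sub>M P) S n (A \<times> B) (C \<times> D) - prob B * prob D * corr M \<tau> n A C)
      \<le> (\<integral>t. \<bar>\<phi> n t\<bar> \<partial>M)" for n
    unfolding corr_skew_Times_defect[OF A C B D] \<phi>_def[symmetric] real_norm_def
  proof (rule order.trans[OF integral_abs_bound integral_mono])
    show "integrable M (\<lambda>t. \<bar>\<phi> n t\<bar>)"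
      using \<phi> by (intro integrable_abs M.integrable_const_bound[where B = 1]) auto
    show "\<bar>indicator C t * indicator A ((\<tau> ^^ n) t) * \<phi> n t\<bar> \<le> \<bar>\<phi> n t\<bar>" for t
      by (simp add: indicator_def)
    show "integrable M (\<lambda>t. \<bar>indicator C t * indicator A ((\<tau> ^^ n) t) * \<phi> n t\<bar>)"
      using \<phi> M.borel_measurable_indicator_funpow[OF A C]
      by (intro integrable_abs M.integrable_bounded_mult) (auto simp: indicator_def)
  qed
  have "(\<lambda>n. \<integral>t. \<bar>\<phi> n t\<bar> \<partial>M) \<longlonglongrightarrow> (\<integral>t. 0 \<partial>M)"
  proof (rule integral_dominated_convergence[where w = "\<lambda>_. 1"])
    show "AE t in M. (\<lambda>n. \<bar>\<phi> n t\<bar>) \<longlonglongrightarrow> 0"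
      using decorrelation_along_orbit[OF B D] by eventually_elim (simp add: \<phi>_def tendsto_rabs_zero)
  qed (use \<phi> in auto)
  then show ?thesis
    by (intro Lim_null_comparison[OF always_eventually[OF allI[OF bound]]]) simp
qed

lemma mixing_wrt_skew:
  assumes "vanishing vanishes" and mixing: "mixing_wrt vanishes M \<tau>"
  shows "mixing_wrt vanishes (M \<Otimes>\<^sub>M P) S"
proof -
  interpret vanishing vanishes by fact
  show ?thesis
  proof (rule mixing_wrt_pair_measureI[OF MP.prob_mpt_axioms])
    fix A B C D assume A: "A \<in> sets M" and B: "B \<in> events" and C: "C \<in> sets M" and D: "D \<in> events"
    have "vanishes (\<lambda>n. corr (M \<Otimes>\<^sub>M P) S n (A \<times> B) (C \<times> D) - prob B * prob D * corr M \<tau> n A C)"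
      by (rule vanishes_tendsto_zero[OF corr_skew_Times_asymptotic[OF A C B D]])
    moreover have "vanishes (\<lambda>n. prob B * prob D * (corr M \<tau> n A C - measure M A * measure M C))"
      using mixing A C unfolding mixing_wrt_def by (intro vanishes_scale) auto
    ultimately have "vanishes (\<lambda>n. (corr (M \<Otimes>\<^sub>M P) S n (A \<times> B) (C \<times> D) - prob B * prob D * corr M \<tau> n A C)
        + prob B * prob D * (corr M \<tau> n A C - measure M A * measure M C))"
      by (rule vanishes_add)
    then show "vanishes (\<lambda>n. corr (M \<Otimes>\<^sub>M P) S n (A \<times> B) (C \<times> D)
        - measure (M \<Otimes>\<^sub>M P) (A \<times> B) * measure (M \<Otimes>\<^sub>M P) (C \<times> D))"
      by (simp add: measure_Times A B C D algebra_simps)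
  qed
qed

end

lemma integral_mult_measure_section_sums:
  fixes h :: "'a \<Rightarrow> real"
  assumes "prob_space M" "prob_space N"
    and h: "h \<in> borel_measurable M" "\<And>t. \<bar>h t\<bar> \<le> 1"
    and F: "disjoint_family F" "range F \<subseteq> sets (M \<Otimes>\<^sub>M N)"
  shows "(\<lambda>i. \<integral>t. h t * measure N (Pair t -` F i) \<partial>M) sums (\<integral>t. h t * measure N (Pair t -` (\<Union>i. F i)) \<partial>M)"
proof -
  interpret M: prob_space M by fact
  interpret N: prob_space N by fact
  have sections: "(\<lambda>i. measure N (Pair t -` F i)) sums measure N (Pair t -` (\<Union>i. F i))" for t
  proof -
    have "(\<lambda>i. measure N (Pair t -` F i)) sums measure N (\<Union>i. Pair t -` F i)"
      using F sets_Pair1 by (intro N.finite_measure_UNION) (auto simp: disjoint_family_on_def)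
    then show ?thesis by (simp add: vimage_UN)
  qed
  have partial_sum: "0 \<le> (\<Sum>i<n. measure N (Pair t -` F i))" "(\<Sum>i<n. measure N (Pair t -` F i)) \<le> 1" for n t
    using sum_le_suminf[OF sums_summable[OF sections[of t]], of "{..<n}"] sums_unique[OF sections[of t]]
      N.prob_le_1[of "Pair t -` (\<Union>i. F i)"] by (auto simp: sum_nonneg)
  have measurable: "(\<lambda>t. measure N (Pair t -` X)) \<in> borel_measurable M" if "X \<in> sets (M \<Otimes>\<^sub>M N)" for X
    unfolding measure_def by (intro borel_measurable_enn2real N.measurable_emeasure_Pair that)
  have "(\<lambda>n. \<integral>t. h t * (\<Sum>i<n. measure N (Pair t -` F i)) \<partial>M) \<longlonglongrightarrow> (\<integral>t. h t * measure N (Pair t -` (\<Union>i. F i)) \<partial>M)"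
  proof (rule integral_dominated_convergence[where w = "\<lambda>_. 1"])
    show "AE t in M. (\<lambda>n. h t * (\<Sum>i<n. measure N (Pair t -` F i))) \<longlonglongrightarrow> h t * measure N (Pair t -` (\<Union>i. F i))"
      using sections unfolding sums_def by (intro AE_I2 tendsto_mult_left)
    show "AE t in M. norm (h t * (\<Sum>i<n. measure N (Pair t -` F i))) \<le> 1" for n
      using h(2) partial_sum by (intro AE_I2) (simp add: abs_mult mult_le_one)
  qed (use h F measurable in \<open>auto intro!: borel_measurable_sum\<close>)
  moreover have "(\<integral>t. h t * (\<Sum>i<n. measure N (Pair t -` F i)) \<partial>M) = (\<Sum>i<n. \<integral>t. h t * measure N (Pair t -` F i) \<partial>M)" for n
    using h F measurable partial_sum
    by (simp add: sum_distrib_left M.integrable_bounded_mult)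
  ultimately show ?thesis unfolding sums_def by simp
qed

lemma (in prob_space) AE_zero_one_if_integral_square_eq:
  fixes h :: "'a \<Rightarrow> real"
  assumes h: "h \<in> borel_measurable M" "\<And>x. 0 \<le> h x" "\<And>x. h x \<le> 1"
    and eq: "(\<integral>x. h x * h x \<partial>M) = (\<integral>x. h x \<partial>M)"
  shows "AE x in M. h x = 0 \<or> h x = 1"
proof -
  have bounded: "AE x in M. \<bar>h x\<bar> \<le> 1" using h(2,3) by simp
  have "integrable M h"
    by (rule integrable_const_bound[where B = 1]) (use h(1) bounded in auto)
  moreover have "integrable M (\<lambda>x. h x * h x)"
    by (rule integrable_bounded_mult[OF h(1) h(1) bounded bounded])
  ultimately have integrable: "integrable M h" "integrable M (\<lambda>x. h x * h x)" .
  have "(\<integral>x. h x - h x * h x \<partial>M) = 0" using eq integrable by simp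
  moreover have "0 \<le> h x - h x * h x" for x using h(2,3)[of x] by (simp add: mult_left_le)
  ultimately have "AE x in M. h x - h x * h x = 0"
    using integrable by (subst integral_nonneg_eq_0_iff_AE[symmetric]) auto
  then show ?thesis by eventually_elim (auto simp: algebra_simps)
qed

context skew_product
begin

lemma invariant_Times_factor:
  assumes E: "E \<in> sets (M \<Otimes>\<^sub>M P)" and inv: "S -` E \<inter> space (M \<Otimes>\<^sub>M P) = E"
    and C: "C \<in> sets M" and D: "D \<in> events"
  shows "measure (M \<Otimes>\<^sub>M P) (E \<inter> (C \<times> D)) = prob D * measure (M \<Otimes>\<^sub>M P) (E \<inter> (C \<times> space P))"
proof -
  let ?\<mu> = "measure (M \<Otimes>\<^sub>M P)"
  define d where "d X n = corr (M \<Otimes>\<^sub>M P) S n X (C \<times> D) - prob D * corr (M \<Otimes>\<^sub>M P) S n X (C \<times> space P)"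
    for X n
  have CD: "C \<times> D \<in> sets (M \<Otimes>\<^sub>M P)" "C \<times> space P \<in> sets (M \<Otimes>\<^sub>M P)" using C D by auto
  have "d E \<longlonglongrightarrow> 0"
  proof (rule tendsto_zero.vanishes_pair_measure[OF MP.finite_measure_axioms _ _ _ _ E])
    fix A B assume A: "A \<in> sets M" and B: "B \<in> events"
    have "(\<lambda>n. (corr (M \<Otimes>\<^sub>M P) S n (A \<times> B) (C \<times> D) - prob B * prob D * corr M \<tau> n A C)
        - prob D * (corr (M \<Otimes>\<^sub>M P) S n (A \<times> B) (C \<times> space P) - prob B * prob (space P) * corr M \<tau> n A C))
        \<longlonglongrightarrow> 0 - prob D * 0"
      by (intro tendsto_diff tendsto_mult_left corr_skew_Times_asymptotic A B C D sets.top)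
    then show "d (A \<times> B) \<longlonglongrightarrow> 0" by (simp add: d_def[abs_def] prob_space algebra_simps)
  next
    fix X n assume "X \<in> sets (M \<Otimes>\<^sub>M P)"
    then show "d (space (M \<Otimes>\<^sub>M P) - X) n = - d X n"
      using CD measure_Times[OF C D] measure_Times[OF C sets.top]
      by (simp add: d_def MP.corr_compl_left prob_space algebra_simps)
  next
    fix F :: "nat \<Rightarrow> ('a \<times> ((int ^ 'd) \<Rightarrow> 'u)) set" and n
    assume "disjoint_family F" "range F \<subseteq> sets (M \<Otimes>\<^sub>M P)"
    then show "(\<lambda>i. d (F i) n) sums d (\<Union>i. F i) n"
      unfolding d_def using CD by (intro sums_diff sums_mult MP.corr_sums_left)
  next
    fix X n assume X: "X \<in> sets (M \<Otimes>\<^sub>M P)"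
    have "0 \<le> corr (M \<Otimes>\<^sub>M P) S n X Z" for Z by (simp add: corr_def)
    moreover have "prob D * corr (M \<Otimes>\<^sub>M P) S n X (C \<times> space P) \<le> corr (M \<Otimes>\<^sub>M P) S n X (C \<times> space P)"
      by (rule mult_left_le_one_le) (auto simp: corr_def)
    ultimately show "\<bar>d X n\<bar> \<le> 2 * ?\<mu> X"
      using MP.corr_le_left[OF X, of n "C \<times> D"] MP.corr_le_left[OF X, of n "C \<times> space P"]
      unfolding d_def abs_le_iff by (intro conjI) (smt (verit) mult_nonneg_nonneg measure_nonneg)+
  qed
  moreover have "d E = (\<lambda>n. ?\<mu> (E \<inter> (C \<times> D)) - prob D * ?\<mu> (E \<inter> (C \<times> space P)))"
    using invariant_funpow[OF measurable_skew inv] by (simp add: d_def[abs_def] corr_def)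
  ultimately show ?thesis by (simp add: LIMSEQ_const_iff)
qed

lemma measurable_section_measure:
  "Z \<in> sets (M \<Otimes>\<^sub>M P) \<Longrightarrow> (\<lambda>t. prob (Pair t -` Z)) \<in> borel_measurable M"
  unfolding measure_def by (intro borel_measurable_enn2real measurable_emeasure_Pair)

lemma section_measure_invariant:
  assumes E: "E \<in> sets (M \<Otimes>\<^sub>M P)" and inv: "S -` E \<inter> space (M \<Otimes>\<^sub>M P) = E" and t: "t \<in> space M"
  shows "prob (Pair (\<tau> t) -` E) = prob (Pair t -` E)"
proof -
  have "Pair t -` E = Pair t -` (S -` E \<inter> space (M \<Otimes>\<^sub>M P))" using inv by simp
  also have "\<dots> = shift (W (\<kappa> t)) -` (Pair (\<tau> t) -` E) \<inter> space P"
    using t by (auto simp: skew_def theta_eq_shift space_pair_measure)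
  finally show ?thesis using prob_shift_vimage[OF sets_Pair1[OF E]] by simp
qed

lemma invariant_Int_Times_eq_integral:
  assumes E: "E \<in> sets (M \<Otimes>\<^sub>M P)" and inv: "S -` E \<inter> space (M \<Otimes>\<^sub>M P) = E"
    and C: "C \<in> sets M" and D: "D \<in> events"
  shows "measure (M \<Otimes>\<^sub>M P) (E \<inter> (C \<times> D)) = (\<integral>t. prob (Pair t -` E) * prob (Pair t -` (C \<times> D)) \<partial>M)"
proof -
  have "Pair t -` (E \<inter> (C \<times> space P)) = (if t \<in> C then Pair t -` E else {})" if "t \<in> space M" for t
    using that sets.sets_into_space[OF E] by (auto simp: space_pair_measure)
  then have "measure (M \<Otimes>\<^sub>M P) (E \<inter> (C \<times> space P)) = (\<integral>t. indicator C t * prob (Pair t -` E) \<partial>M)"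
    using E C
    by (subst measure_pair_measure_eq_integral[OF prob_space_M prob_space_axioms])
       (auto simp: indicator_def intro!: Bochner_Integration.integral_cong)
  moreover have "(\<integral>t. prob (Pair t -` E) * prob (Pair t -` (C \<times> D)) \<partial>M)
      = (\<integral>t. prob D * (indicator C t * prob (Pair t -` E)) \<partial>M)"
    by (intro Bochner_Integration.integral_cong) (auto simp: indicator_def)
  ultimately show ?thesis
    using invariant_Times_factor[OF E inv C D] by simp
qed

text \<open>Both sides are finite measures in \<open>Z\<close>; they agree on rectangles by the previous lemma.\<close>

lemma invariant_Int_eq_integral:
  assumes E: "E \<in> sets (M \<Otimes>\<^sub>M P)" and inv: "S -` E \<inter> space (M \<Otimes>\<^sub>M P) = E"
    and Z: "Z \<in> sets (M \<Otimes>\<^sub>M P)"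
  shows "measure (M \<Otimes>\<^sub>M P) (E \<inter> Z) = (\<integral>t. prob (Pair t -` E) * prob (Pair t -` Z) \<partial>M)"
proof -
  let ?\<mu> = "measure (M \<Otimes>\<^sub>M P)"
  define h where "h t = prob (Pair t -` E)" for t
  have h: "h \<in> borel_measurable M" "\<And>t. \<bar>h t\<bar> \<le> 1"
    using measurable_section_measure[OF E] by (simp_all add: h_def[abs_def])
  have pair_integral: "?\<mu> X = (\<integral>t. prob (Pair t -` X) \<partial>M)" if "X \<in> sets (M \<Otimes>\<^sub>M P)" for X
    by (rule measure_pair_measure_eq_integral[OF prob_space_M prob_space_axioms that])
  have "Z \<in> sigma_sets (space M \<times> space P) {a \<times> b | a b. a \<in> sets M \<and> b \<in> sets P}"
    using Z by (simp add: sets_pair_measure)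
  from Int_stable_pair_measure_generator pair_measure_closed this
  show ?thesis unfolding h_def[symmetric]
  proof (induct rule: sigma_sets_induct_disjoint)
    case (basic X)
    then obtain c d where "X = c \<times> d" "c \<in> sets M" "d \<in> events" by auto
    then show ?case using invariant_Int_Times_eq_integral[OF E inv] by (simp add: h_def)
  next
    case (compl A)
    then have A: "A \<in> sets (M \<Otimes>\<^sub>M P)" by (simp add: sets_pair_measure)
    have "E \<inter> (space M \<times> space P - A) = E - E \<inter> A"
      using sets.sets_into_space[OF E] by (auto simp: space_pair_measure)
    then have "?\<mu> (E \<inter> (space M \<times> space P - A)) = ?\<mu> E - ?\<mu> (E \<inter> A)"
      using E A by (simp add: MP.finite_measure_Diff)
    moreover have "(\<integral>t. h t * prob (Pair t -` (space M \<times> space P - A)) \<partial>M)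
        = (\<integral>t. h t - h t * prob (Pair t -` A) \<partial>M)"
    proof (rule Bochner_Integration.integral_cong)
      fix t assume "t \<in> space M"
      then have "Pair t -` (space M \<times> space P - A) = space P - Pair t -` A" by auto
      then show "h t * prob (Pair t -` (space M \<times> space P - A)) = h t - h t * prob (Pair t -` A)"
        by (simp add: prob_compl[OF sets_Pair1[OF A]] algebra_simps)
    qed simp
    moreover have "integrable M h"
      by (rule M.integrable_const_bound[where B = 1]) (use h in auto)
    moreover have "integrable M (\<lambda>t. h t * prob (Pair t -` A))"
      by (rule M.integrable_bounded_mult) (use h measurable_section_measure[OF A] in auto)
    ultimately show ?case
      using compl(2) pair_integral[OF E, unfolded h_def[symmetric]] by simp
  next
    case (union F)
    then have F: "range F \<subseteq> sets (M \<Otimes>\<^sub>M P)" by (simp add: sets_pair_measure)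
    have "(\<lambda>i. ?\<mu> (E \<inter> F i)) sums ?\<mu> (\<Union>i. E \<inter> F i)"
      using union(1) E F by (intro MP.finite_measure_UNION) (auto simp: disjoint_family_on_def)
    moreover have "(\<lambda>i. \<integral>t. h t * prob (Pair t -` F i) \<partial>M) sums (\<integral>t. h t * prob (Pair t -` (\<Union>i. F i)) \<partial>M)"
      by (rule integral_mult_measure_section_sums[OF prob_space_M prob_space_axioms h union(1) F])
    ultimately show ?case using union(3) by (simp add: sums_unique2)
  qed simp
qed

lemma ergodic_skew:
  assumes "ergodic M \<tau>"
  shows "ergodic (M \<Otimes>\<^sub>M P) S"
  unfolding ergodic_def
proof (intro conjI ballI impI)
  fix E assume E: "E \<in> sets (M \<Otimes>\<^sub>M P)" and inv: "S -` E \<inter> space (M \<Otimes>\<^sub>M P) = E"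
  define h where "h t = prob (Pair t -` E)" for t
  have h: "h \<in> borel_measurable M" "\<And>t. 0 \<le> h t" "\<And>t. h t \<le> 1"
    using measurable_section_measure[OF E] by (simp_all add: h_def[abs_def])
  have \<mu>E: "measure (M \<Otimes>\<^sub>M P) E = (\<integral>t. h t \<partial>M)"
    unfolding h_def by (rule measure_pair_measure_eq_integral[OF prob_space_M prob_space_axioms E])
  then have "(\<integral>t. h t * h t \<partial>M) = (\<integral>t. h t \<partial>M)"
    using invariant_Int_eq_integral[OF E inv E] by (simp add: h_def)
  then have zero_one: "AE t in M. h t = 0 \<or> h t = 1"
    by (rule M.AE_zero_one_if_integral_square_eq[OF h])
  define H where "H = h -` {1} \<inter> space M"
  have H: "H \<in> sets M" unfolding H_def by (rule measurable_sets[OF h(1)]) simp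
  have "\<tau> -` H \<inter> space M = H"
    using section_measure_invariant[OF E inv] M.measurable_T_funpow[of 1, THEN measurable_space]
    by (auto simp: H_def h_def)
  then have "measure M H = 0 \<or> measure M H = 1"
    using assms H unfolding ergodic_def by blast
  moreover have "(\<integral>t. h t \<partial>M) = measure M H"
  proof -
    have "(\<integral>t. h t \<partial>M) = (\<integral>t. indicator H t \<partial>M)"
      using zero_one h(1) H by (intro integral_cong_AE) (auto simp: H_def indicator_def)
    then show ?thesis using H by simp
  qed
  ultimately show "measure (M \<Otimes>\<^sub>M P) E = 0 \<or> measure (M \<Otimes>\<^sub>M P) E = 1" using \<mu>E by simp
qed (rule mpt_skew)

end

theorem corollary2p3:
  fixes Y :: "'u measure"
    and P :: "((int ^ 'd) \<Rightarrow> 'u) measure"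
    and M :: "'a measure"
    and \<tau> :: "'a \<Rightarrow> 'a"
    and \<kappa> :: "'a \<Rightarrow> int \<times> int"
    and v1 v2 :: "int ^ 'd"
  assumes d2: "CARD('d) \<ge> 2"
    and P_sets: "sets P = sets (config_space Y :: ((int ^ 'd) \<Rightarrow> 'u) measure)"
    and P_prob: "prob_space P"
    and P_shift: "\<forall>v :: int ^ 'd. mpt P (shift v)"
    and P_tail: "tail_trivial Y P"
    and indep: "lin_indep2 v1 v2"
    and M_prob: "prob_space M"
    and \<tau>_mpt: "mpt M \<tau>"
    and \<kappa>_meas: "\<kappa> \<in> measurable M (count_space UNIV)"
    and transient: "AE t in M. filterlim (\<lambda>n. maxnorm2 (cocycle_sum \<tau> \<kappa> n t)) at_top sequentially"
  shows "(ergodic M \<tau> \<longrightarrow> ergodic (M \<Otimes>\<^sub>M P) (skew v1 v2 \<tau> \<kappa>))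
       \<and> (weakly_mixing M \<tau> \<longrightarrow> weakly_mixing (M \<Otimes>\<^sub>M P) (skew v1 v2 \<tau> \<kappa>))
       \<and> (strongly_mixing M \<tau> \<longrightarrow> strongly_mixing (M \<Otimes>\<^sub>M P) (skew v1 v2 \<tau> \<kappa>))"
proof -
  have "skew_product Y P M \<tau> \<kappa> v1 v2"
    unfolding skew_product_def skew_product_axioms_def stationary_tail_trivial_def
      stationary_tail_trivial_axioms_def tail_trivial_config_def tail_trivial_config_axioms_def
      config_prob_def config_prob_axioms_def
    using P_sets P_prob P_shift P_tail indep M_prob \<tau>_mpt \<kappa>_meas transient by blast
  then interpret skew_product Y P M \<tau> \<kappa> v1 v2 .
  show ?thesis
    using ergodic_skew mpt_skew
      mixing_wrt_skew[OF tendsto_zero.vanishing_axioms] mixing_wrt_skew[OF cesaro.vanishing_axioms]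
    by (simp add: strongly_mixing_iff weakly_mixing_iff)
qed

end
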